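(* With $u_e:\mathbf{k}\to\text{Ш}_e(A)$, $c\mapsto c1_A$, the quintuple $(\text{Ш}_e(A),\diamond,u_e,\Delta_e,\varepsilon_e)$ is a bialgebra.
   Context: $\mathbf{k}$ is a commutative unitary ring, $\lambda,\kappa\in\mathbf{k}$, $\mu$ a root of $t^2-\lambda t+\kappa$. An extended Rota-Baxter operator of weight $(\lambda,\kappa)$ satisfies $P(x)P(y)=P(xP(y))+P(P(x)y)+\lambda P(xy)+\kappa xy$. $A=(A,m_A,\mu_A,\Delta_A,\varepsilon_A)$ is a commutative bialgebra and $(\text{Ш}_e(A),\diamond,P_e,j_A)$ is the free commutative extended Rota-Baxter algebra of weight $(\lambda,\kappa)$ on $A$, with $\text{Ш}_e(A)=\bigoplus_{n\ge1}A^{\otimes n}$, $P_e(\mathfrak{a})=1_A\otimes\mathfrak{a}$, and the recursively defined generalized quasi-shuffle product $\diamond$. $\varepsilon_e:\text{Ш}_e(A)\to\mathbf{k}$ is the unique extended Rota-Baxter algebra homomorphism with $\varepsilon_e\circ j_A=\varepsilon_A$, $\varepsilon_e\circ P_e=-\mu\varepsilon_e$; $\Delta_e:\text{Ш}_e(A)\to\text{Ш}_e(A)\bar\otimes\text{Ш}_e(A)$ is the unique extended Rota-Baxter algebra homomorphism with $\Delta_e\circ j_A=\Delta_A$ and $\Delta_e\circ P_e=\bar P\circ\Delta_e$, where $\bar P(\mathfrak{a}\bar\otimes\mathfrak{b})=P_e(\mathfrak{a})\bar\otimes\varepsilon_e(\mathfrak{b})1_A+\mu\mathfrak{a}\bar\otimes\varepsilon_e(\mathfrak{b})1_A+\mathfrak{a}\bar\otimes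 P_e(\mathfrak{b})$ and $\bar\otimes$ is the tensor product between copies of $\text{Ш}_e(A)$. *)

theory Defs
  imports Main "HOL.Modules" "HOL-Library.Poly_Mapping"
begin

text \<open>A tensor word of type 'a list list represents a pure tensor
  (v_1) (x) ... (x) (v_m), each v_i = a_1 (x) ... (x) a_n being a pure tensor of
  A^{(x) n}; the outer list ranges over the tensor factors of Sh_e(A)^{(x) m}.
  The empty outer list [] represents the scalar 1 in k = Sh_e(A)^{(x) 0}.
  Elements are finite k-linear combinations of words, taken modulo the
  multilinearity relations (this is the usual construction of tensor products
  as a quotient of a free module).  Words containing an empty inner list are
  killed, since Sh_e(A) is the sum over n >= 1 only.\<close>

type_synonym ('a,'k) tw = "'a list list \<Rightarrow>\<^sub>0 'k"

definition tsmult :: "'k::comm_ring_1 \<Rightarrow> ('w \<Rightarrow>\<^sub>0 'k) \<Rightarrow> ('w \<Rightarrow>\<^sub>0 'k)" where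
  "tsmult c x = Poly_Mapping.map (\<lambda>v. c * v) x"

definition wd :: "'w \<Rightarrow> ('w \<Rightarrow>\<^sub>0 'k::comm_ring_1)" where
  "wd w = Poly_Mapping.single w 1"

definition lin :: "('w \<Rightarrow> ('v \<Rightarrow>\<^sub>0 'k::comm_ring_1)) \<Rightarrow> ('w \<Rightarrow>\<^sub>0 'k) \<Rightarrow> ('v \<Rightarrow>\<^sub>0 'k)" where
  "lin f x = (\<Sum>w\<in>Poly_Mapping.keys x. tsmult (Poly_Mapping.lookup x w) (f w))"

definition linf :: "('w \<Rightarrow> 'k::comm_ring_1) \<Rightarrow> ('w \<Rightarrow>\<^sub>0 'k) \<Rightarrow> 'k" where
  "linf f x = (\<Sum>w\<in>Poly_Mapping.keys x. Poly_Mapping.lookup x w * f w)"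

definition bilin :: "('w \<Rightarrow> 'u \<Rightarrow> ('v \<Rightarrow>\<^sub>0 'k::comm_ring_1)) \<Rightarrow> ('w \<Rightarrow>\<^sub>0 'k) \<Rightarrow> ('u \<Rightarrow>\<^sub>0 'k) \<Rightarrow> ('v \<Rightarrow>\<^sub>0 'k)" where
  "bilin f x y = lin (\<lambda>v. lin (\<lambda>w. f v w) y) x"

definition tensor_rels :: "('k::comm_ring_1 \<Rightarrow> 'a::ab_group_add \<Rightarrow> 'a) \<Rightarrow> ('a,'k) tw set" where
  "tensor_rels s =
     {wd (us @ (xs @ (x + y) # ys) # vs) - wd (us @ (xs @ x # ys) # vs) - wd (us @ (xs @ y # ys) # vs)
       | us xs x y ys vs. True}
   \<union> {wd (us @ (xs @ s c x # ys) # vs) - tsmult c (wd (us @ (xs @ x # ys) # vs))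
       | us xs c x ys vs. True}
   \<union> {wd w | w. [] \<in> set w}"

inductive_set kspan :: "('w \<Rightarrow>\<^sub>0 'k::comm_ring_1) set \<Rightarrow> ('w \<Rightarrow>\<^sub>0 'k) set" for G where
  kspan_zero: "0 \<in> kspan G"
| kspan_step: "x \<in> kspan G \<Longrightarrow> g \<in> G \<Longrightarrow> tsmult c g + x \<in> kspan G"

definition teq :: "('k::comm_ring_1 \<Rightarrow> 'a::ab_group_add \<Rightarrow> 'a) \<Rightarrow> ('a,'k) tw \<Rightarrow> ('a,'k) tw \<Rightarrow> bool" where
  "teq s x y \<longleftrightarrow> x - y \<in> kspan (tensor_rels s)"

text \<open>Representatives of elements of Sh_e(A) (one tensor factor) and of Sh_e(A) (x) Sh_e(A).\<close>
definition Sh :: "('a,'k::comm_ring_1) tw set" where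
  "Sh = {x. \<forall>w\<in>Poly_Mapping.keys x. \<exists>v. w = [v]}"

definition Sh2 :: "('a,'k::comm_ring_1) tw set" where
  "Sh2 = {x. \<forall>w\<in>Poly_Mapping.keys x. \<exists>v u. w = [v, u]}"

definition tprod :: "('a,'k::comm_ring_1) tw \<Rightarrow> ('a,'k) tw \<Rightarrow> ('a,'k) tw" where
  "tprod x y = bilin (\<lambda>v w. wd (v @ w)) x y"

text \<open>c (x) w  and  (c a_1) (x) ... for w = a_1 (x) ... in Sh_e(A).\<close>
definition pre :: "'a \<Rightarrow> ('a,'k::comm_ring_1) tw \<Rightarrow> ('a,'k) tw" where
  "pre c x = lin (\<lambda>w. case w of [v] \<Rightarrow> wd [c # v] | _ \<Rightarrow> 0) x"

definition mfirst :: "('a \<Rightarrow> 'a \<Rightarrow> 'a) \<Rightarrow> 'a \<Rightarrow> ('a,'k::comm_ring_1) tw \<Rightarrow> ('a,'k) tw" where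
  "mfirst m c x = lin (\<lambda>w. case w of [b # v] \<Rightarrow> wd [m c b # v] | _ \<Rightarrow> 0) x"

function qs :: "('a::ab_group_add \<Rightarrow> 'a \<Rightarrow> 'a) \<Rightarrow> 'a \<Rightarrow> 'k::comm_ring_1 \<Rightarrow> 'k \<Rightarrow> 'a list \<Rightarrow> 'a list \<Rightarrow> ('a,'k) tw" where
  "qs m e lam kap (a # xs) (b # ys) =
     (if xs = [] then wd [m a b # ys]
      else if ys = [] then wd [m a b # xs]
      else pre (m a b) (qs m e lam kap xs (e # ys))
         + pre (m a b) (qs m e lam kap (e # xs) ys)
         + tsmult lam (pre (m a b) (qs m e lam kap xs ys))
         + tsmult kap (mfirst m (m a b) (qs m e lam kap xs ys)))"
| "qs m e lam kap [] _ = 0"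
| "qs m e lam kap _ [] = 0"
  by pat_completeness auto
termination
  by (relation "measure (\<lambda>(m,e,lam,kap,u,v). length u + length v)") auto

text \<open>Componentwise product on Sh_e(A)^{(x) n} (tensor product of algebras).\<close>
fun wprod :: "('a::ab_group_add \<Rightarrow> 'a \<Rightarrow> 'a) \<Rightarrow> 'a \<Rightarrow> 'k::comm_ring_1 \<Rightarrow> 'k \<Rightarrow> 'a list list \<Rightarrow> 'a list list \<Rightarrow> ('a,'k) tw" where
  "wprod m e lam kap [] [] = wd []"
| "wprod m e lam kap (v # vs) (w # ws) = tprod (qs m e lam kap v w) (wprod m e lam kap vs ws)"
| "wprod m e lam kap _ _ = 0"

definition dprod :: "('a::ab_group_add \<Rightarrow> 'a \<Rightarrow> 'a) \<Rightarrow> 'a \<Rightarrow> 'k::comm_ring_1 \<Rightarrow> 'k \<Rightarrow> ('a,'k) tw \<Rightarrow> ('a,'k) tw \<Rightarrow> ('a,'k) tw" where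
  "dprod m e lam kap x y = bilin (wprod m e lam kap) x y"

definition ue :: "'a \<Rightarrow> 'k::comm_ring_1 \<Rightarrow> ('a,'k) tw" where
  "ue e c = tsmult c (wd [[e]])"

text \<open>Counit: the extended Rota-Baxter homomorphism with eps_e o j_A = eps_A and
  eps_e o P_e = -mu eps_e; since a_1 (x) ... (x) a_n = a_1 <> P_e(a_2 (x) ... (x) a_n) this forces
  eps_e(a_1 (x) ... (x) a_n) = eps_A(a_1) (-mu) eps_e(a_2 (x) ... (x) a_n).\<close>
fun epsw :: "('a \<Rightarrow> 'k::comm_ring_1) \<Rightarrow> 'k \<Rightarrow> 'a list \<Rightarrow> 'k" where
  "epsw epsA mu [] = 0"
| "epsw epsA mu [a] = epsA a"
| "epsw epsA mu (a # b # bs) = epsA a * (- mu) * epsw epsA mu (b # bs)"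

definition epse :: "('a \<Rightarrow> 'k::comm_ring_1) \<Rightarrow> 'k \<Rightarrow> ('a,'k) tw \<Rightarrow> 'k" where
  "epse epsA mu x = linf (\<lambda>w. case w of [v] \<Rightarrow> epsw epsA mu v | _ \<Rightarrow> 0) x"

definition Pbar :: "'a \<Rightarrow> ('a \<Rightarrow> 'k::comm_ring_1) \<Rightarrow> 'k \<Rightarrow> ('a,'k) tw \<Rightarrow> ('a,'k) tw" where
  "Pbar e epsA mu x = lin (\<lambda>w. case w of
       [v, u] \<Rightarrow> tsmult (epsw epsA mu u) (wd [e # v, [e]])
               + tsmult (mu * epsw epsA mu u) (wd [v, [e]])
               + wd [v, e # u]
     | _ \<Rightarrow> 0) x"

text \<open>Comultiplication: the extended Rota-Baxter homomorphism with Delta_e o j_A = Delta_A and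
  Delta_e o P_e = Pbar o Delta_e; on pure tensors this forces
  Delta_e(a_1 (x) a') = Delta_A(a_1) <> Pbar(Delta_e(a')).
  Delta_A(a) is represented by a combination of words [[x],[y]] (i.e. of A (x) A).\<close>
fun Dw :: "('a::ab_group_add \<Rightarrow> 'a \<Rightarrow> 'a) \<Rightarrow> 'a \<Rightarrow> 'k::comm_ring_1 \<Rightarrow> 'k \<Rightarrow> 'k \<Rightarrow>
    ('a \<Rightarrow> ('a,'k) tw) \<Rightarrow> ('a \<Rightarrow> 'k) \<Rightarrow> 'a list \<Rightarrow> ('a,'k) tw" where
  "Dw m e lam kap mu DA epsA [] = 0"
| "Dw m e lam kap mu DA epsA [a] = DA a"
| "Dw m e lam kap mu DA epsA (a # b # bs) =
     dprod m e lam kap (DA a) (Pbar e epsA mu (Dw m e lam kap mu DA epsA (b # bs)))"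

definition De :: "('a::ab_group_add \<Rightarrow> 'a \<Rightarrow> 'a) \<Rightarrow> 'a \<Rightarrow> 'k::comm_ring_1 \<Rightarrow> 'k \<Rightarrow> 'k \<Rightarrow>
    ('a \<Rightarrow> ('a,'k) tw) \<Rightarrow> ('a \<Rightarrow> 'k) \<Rightarrow> ('a,'k) tw \<Rightarrow> ('a,'k) tw" where
  "De m e lam kap mu DA epsA x = lin (\<lambda>w. case w of [v] \<Rightarrow> Dw m e lam kap mu DA epsA v | _ \<Rightarrow> 0) x"

definition tmap2 :: "('a list \<Rightarrow> ('a,'k::comm_ring_1) tw) \<Rightarrow> ('a list \<Rightarrow> ('a,'k) tw) \<Rightarrow> ('a,'k) tw \<Rightarrow> ('a,'k) tw" where
  "tmap2 f g x = lin (\<lambda>w. case w of [v, u] \<Rightarrow> tprod (f v) (g u) | _ \<Rightarrow> 0) x"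

end

theory Submission
  imports Defs
begin

(*
  Every map is defined
  on words and is linear in each letter, hence respects the relations, so identities can be
  checked on words and extended bilinearly.

  It is commutative, and
  associative by induction on the total length: writing a word as a letter times P_e(word), both
  sides of the associativity law expand by the extended Rota-Baxter identity of P_e into products
  of shorter words.  On words, the comultiplication is
    Delta_e(a (x) a') = Delta_A(a) <> Pbar(Delta_e(a')),
  and since mu^2 - lam mu + kap = 0, the operator Pbar again satisfies the extended Rota-Baxter
  identity on Sh_e(A) (x) Sh_e(A).  This makes Delta_e and eps_e multiplicative, by induction along
  the recursion of the quasi-shuffle, and the counit and coassociativity axioms follow from those
  of A by induction on the length of a word.
*)

section \<open>Linear algebra on formal combinations\<close>

lemma lookup_tsmult [simp]: "Poly_Mapping.lookup (tsmult c x) w = c * Poly_Mapping.lookup x w"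
  by (simp add: tsmult_def Poly_Mapping.map.rep_eq when_def)

lemma lookup_wd: "Poly_Mapping.lookup (wd w) u = (if u = w then 1 else 0)"
  by (simp add: wd_def lookup_single when_def)

lemma keys_wd [simp]: "Poly_Mapping.keys (wd w :: 'w \<Rightarrow>\<^sub>0 'k::comm_ring_1) = {w}"
  by (simp add: wd_def)

lemma keys_tsmult: "Poly_Mapping.keys (tsmult c x) \<subseteq> Poly_Mapping.keys x"
  by (auto simp: in_keys_iff)

lemma tsmult_add_right: "tsmult c (x + y) = tsmult c x + tsmult c y"
  by (rule poly_mapping_eqI) (simp add: lookup_add algebra_simps)

lemma tsmult_add_left: "tsmult (c + d) x = tsmult c x + tsmult d x"
  by (rule poly_mapping_eqI) (simp add: lookup_add algebra_simps)

lemma tsmult_tsmult [simp]: "tsmult c (tsmult d x) = tsmult (c * d) x"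
  by (rule poly_mapping_eqI) (simp add: algebra_simps)

lemma tsmult_one [simp]: "tsmult 1 x = x"
  by (rule poly_mapping_eqI) simp

lemma tsmult_zero_left [simp]: "tsmult 0 x = 0"
  by (rule poly_mapping_eqI) simp

lemma tsmult_zero_right [simp]: "tsmult c 0 = 0"
  by (rule poly_mapping_eqI) simp

lemma tsmult_uminus_left: "tsmult (- c) x = - tsmult c x"
  by (rule poly_mapping_eqI) (simp add: lookup_minus)

lemma tsmult_diff_right: "tsmult c (x - y) = tsmult c x - tsmult c y"
  by (rule poly_mapping_eqI) (simp add: lookup_minus algebra_simps)

lemma tsmult_sum: "tsmult c (sum f A) = (\<Sum>a\<in>A. tsmult c (f a))"
  by (induction A rule: infinite_finite_induct) (auto simp: tsmult_add_right)

lemma tsmult_sum_left: "tsmult (sum f A) x = (\<Sum>a\<in>A. tsmult (f a) x)"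
  by (induction A rule: infinite_finite_induct) (auto simp: tsmult_add_left)

lemma lin_superset:
  assumes "finite S" "Poly_Mapping.keys x \<subseteq> S"
  shows "lin f x = (\<Sum>w\<in>S. tsmult (Poly_Mapping.lookup x w) (f w))"
  unfolding lin_def by (rule sum.mono_neutral_left) (use assms in \<open>auto simp: in_keys_iff\<close>)

lemma lin_zero [simp]: "lin f 0 = 0"
  by (simp add: lin_def)

lemma lin_add: "lin f (x + y) = lin f x + lin f y"
proof -
  let ?S = "Poly_Mapping.keys x \<union> Poly_Mapping.keys y"
  have S: "finite ?S" by simp
  have "lin f (x + y) = (\<Sum>w\<in>?S. tsmult (Poly_Mapping.lookup (x + y) w) (f w))"
    by (rule lin_superset[OF S keys_add])
  also have "\<dots> = lin f x + lin f y"
    by (simp add: lookup_add tsmult_add_left sum.distrib lin_superset[OF S])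
  finally show ?thesis .
qed

lemma lin_tsmult: "lin f (tsmult c x) = tsmult c (lin f x)"
proof -
  have "lin f (tsmult c x) = (\<Sum>w\<in>Poly_Mapping.keys x. tsmult (Poly_Mapping.lookup (tsmult c x) w) (f w))"
    by (rule lin_superset) (simp_all add: keys_tsmult)
  then show ?thesis
    by (simp add: lin_def tsmult_sum)
qed

lemma lin_diff: "lin f (x - y) = lin f x - lin f y"
  using lin_add[of f "x - y" y] by (simp add: eq_diff_eq)

lemma lin_wd [simp]: "lin f (wd w) = f w"
  by (simp add: lin_def wd_def)

lemma lin_sum: "lin f (sum g A) = (\<Sum>a\<in>A. lin f (g a))"
  by (induction A rule: infinite_finite_induct) (auto simp: lin_add)

lemma lin_cong: "(\<And>w. w \<in> Poly_Mapping.keys x \<Longrightarrow> f w = g w) \<Longrightarrow> lin f x = lin g x"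
  by (simp add: lin_def)

lemma lin_fun_add: "lin (\<lambda>w. f w + g w) x = lin f x + lin g x"
  by (simp add: lin_def tsmult_add_right sum.distrib)

lemma lin_fun_diff: "lin (\<lambda>w. f w - g w) x = lin f x - lin g x"
  by (simp add: lin_def tsmult_diff_right sum_subtractf)

lemma lin_fun_tsmult: "lin (\<lambda>w. tsmult c (f w)) x = tsmult c (lin f x)"
  by (simp add: lin_def tsmult_sum mult.commute)

lemma lin_fun_zero [simp]: "lin (\<lambda>w. 0) x = 0"
  by (simp add: lin_def)

lemma lin_lin: "lin f (lin g x) = lin (\<lambda>w. lin f (g w)) x"
  by (simp add: lin_def[of _ x] lin_sum lin_tsmult)

lemma lin_wd_id [simp]: "lin wd x = x"
proof (rule poly_mapping_eqI)
  fix u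
  have "Poly_Mapping.lookup (lin wd x) u =
      (\<Sum>w\<in>Poly_Mapping.keys x. Poly_Mapping.lookup x w * (if u = w then 1 else 0))"
    by (simp add: lin_def lookup_sum lookup_wd)
  also have "\<dots> = (\<Sum>w\<in>Poly_Mapping.keys x. if w = u then Poly_Mapping.lookup x w else 0)"
    by (rule sum.cong) auto
  finally show "Poly_Mapping.lookup (lin wd x) u = Poly_Mapping.lookup x u"
    by (simp add: sum.delta in_keys_iff)
qed

lemma lin_const: "lin (\<lambda>w. tsmult (g w) T) x = tsmult (linf g x) T"
  by (simp add: lin_def linf_def tsmult_sum_left)

lemma keys_lin: "Poly_Mapping.keys (lin f x) \<subseteq> (\<Union>w\<in>Poly_Mapping.keys x. Poly_Mapping.keys (f w))"
  unfolding lin_def using keys_sum keys_tsmult by fastforce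

lemma lin_swap: "lin (\<lambda>v. lin (\<lambda>w. h v w) y) x = lin (\<lambda>w. lin (\<lambda>v. h v w) x) y"
proof -
  have "lin (\<lambda>v. lin (\<lambda>w. h v w) y) x = (\<Sum>v\<in>Poly_Mapping.keys x. \<Sum>w\<in>Poly_Mapping.keys y.
      tsmult (Poly_Mapping.lookup x v * Poly_Mapping.lookup y w) (h v w))"
    by (simp add: lin_def tsmult_sum)
  also have "\<dots> = (\<Sum>w\<in>Poly_Mapping.keys y. \<Sum>v\<in>Poly_Mapping.keys x.
      tsmult (Poly_Mapping.lookup y w * Poly_Mapping.lookup x v) (h v w))"
    by (subst sum.swap) (simp add: mult.commute)
  also have "\<dots> = lin (\<lambda>w. lin (\<lambda>v. h v w) x) y"
    by (simp add: lin_def tsmult_sum)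
  finally show ?thesis .
qed

lemma linear_eq_lin:
  assumes add: "\<And>x y. F (x + y) = F x + F y" and scale: "\<And>c x. F (tsmult c x) = tsmult c (F x)"
  shows "F x = lin (\<lambda>w. F (wd w)) x"
proof -
  have F_sum: "F (sum g A) = (\<Sum>a\<in>A. F (g a))" for g :: "_ \<Rightarrow> _" and A
  proof (induction A rule: infinite_finite_induct)
    case (infinite A)
    then show ?case using scale[of 0 0] by simp
  next
    case empty
    then show ?case using scale[of 0 0] by simp
  qed (simp add: add)
  have "F x = F (lin wd x)" by simp
  also have "\<dots> = lin (\<lambda>w. F (wd w)) x"
    unfolding lin_def[of wd] F_sum by (simp add: scale lin_def)
  finally show ?thesis .
qed

lemma linear_ext_eq:
  assumes "\<And>x y. F (x + y) = F x + F y" "\<And>c x. F (tsmult c x) = tsmult c (F x)"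
    and "\<And>x y. G (x + y) = G x + G y" "\<And>c x. G (tsmult c x) = tsmult c (G x)"
    and "\<And>w. w \<in> Poly_Mapping.keys x \<Longrightarrow> F (wd w) = G (wd w)"
  shows "F x = G x"
proof -
  have "F x = lin (\<lambda>w. F (wd w)) x" by (rule linear_eq_lin) (simp_all add: assms)
  also have "\<dots> = lin (\<lambda>w. G (wd w)) x" by (rule lin_cong) (simp add: assms)
  also have "\<dots> = G x" by (rule linear_eq_lin[symmetric]) (simp_all add: assms)
  finally show ?thesis .
qed

lemma bilinear_ext_eq:
  assumes "\<And>x x' y. F (x + x') y = F x y + F x' y" "\<And>c x y. F (tsmult c x) y = tsmult c (F x y)"
    and "\<And>x y y'. F x (y + y') = F x y + F x y'" "\<And>c x y. F x (tsmult c y) = tsmult c (F x y)"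
    and "\<And>x x' y. G (x + x') y = G x y + G x' y" "\<And>c x y. G (tsmult c x) y = tsmult c (G x y)"
    and "\<And>x y y'. G x (y + y') = G x y + G x y'" "\<And>c x y. G x (tsmult c y) = tsmult c (G x y)"
    and "\<And>v w. v \<in> Poly_Mapping.keys x \<Longrightarrow> w \<in> Poly_Mapping.keys y \<Longrightarrow> F (wd v) (wd w) = G (wd v) (wd w)"
  shows "F x y = G x y"
proof (rule linear_ext_eq[where F = "\<lambda>x. F x y" and G = "\<lambda>x. G x y"])
  fix v assume "v \<in> Poly_Mapping.keys x"
  show "F (wd v) y = G (wd v) y"
    by (rule linear_ext_eq[where F = "F (wd v)" and G = "G (wd v)"]) (simp_all add: assms \<open>v \<in> _\<close>)
qed (simp_all add: assms)

lemma linf_superset: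
  assumes "finite S" "Poly_Mapping.keys x \<subseteq> S"
  shows "linf f x = (\<Sum>w\<in>S. Poly_Mapping.lookup x w * f w)"
  unfolding linf_def by (rule sum.mono_neutral_left) (use assms in \<open>auto simp: in_keys_iff\<close>)

lemma linf_add: "linf f (x + y) = linf f x + linf f y"
proof -
  let ?S = "Poly_Mapping.keys x \<union> Poly_Mapping.keys y"
  have S: "finite ?S" by simp
  have "linf f (x + y) = (\<Sum>w\<in>?S. Poly_Mapping.lookup (x + y) w * f w)"
    by (rule linf_superset[OF S keys_add])
  also have "\<dots> = linf f x + linf f y"
    by (simp add: lookup_add algebra_simps sum.distrib linf_superset[OF S])
  finally show ?thesis .
qed

lemma linf_tsmult: "linf f (tsmult c x) = c * linf f x"
proof -
  have "linf f (tsmult c x) = (\<Sum>w\<in>Poly_Mapping.keys x. Poly_Mapping.lookup (tsmult c x) w * f w)"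
    by (rule linf_superset) (simp_all add: keys_tsmult)
  then show ?thesis
    by (simp add: linf_def sum_distrib_left mult.assoc)
qed

lemma linf_zero [simp]: "linf f 0 = 0"
  by (simp add: linf_def)

lemma linf_diff: "linf f (x - y) = linf f x - linf f y"
  using linf_add[of f "x - y" y] by (simp add: eq_diff_eq)

lemma linf_wd [simp]: "linf f (wd w) = f w"
  by (simp add: linf_def wd_def)

lemma linf_sum: "linf f (sum g A) = (\<Sum>a\<in>A. linf f (g a))"
  by (induction A rule: infinite_finite_induct) (auto simp: linf_add)

lemma linf_lin: "linf f (lin g x) = linf (\<lambda>w. linf f (g w)) x"
  by (simp add: lin_def linf_def[of _ x] linf_sum linf_tsmult)

lemma linf_cong: "(\<And>w. w \<in> Poly_Mapping.keys x \<Longrightarrow> f w = g w) \<Longrightarrow> linf f x = linf g x"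
  by (simp add: linf_def)

lemma linf_fun_mult: "linf (\<lambda>w. c * f w) x = c * linf f x"
  by (simp add: linf_def algebra_simps sum_distrib_left)

lemma bilin_add_left: "bilin f (x + x') y = bilin f x y + bilin f x' y"
  by (simp add: bilin_def lin_add)

lemma bilin_add_right: "bilin f x (y + y') = bilin f x y + bilin f x y'"
  by (simp add: bilin_def lin_add lin_fun_add)

lemma bilin_tsmult_left: "bilin f (tsmult c x) y = tsmult c (bilin f x y)"
  by (simp add: bilin_def lin_tsmult)

lemma bilin_tsmult_right: "bilin f x (tsmult c y) = tsmult c (bilin f x y)"
  by (simp add: bilin_def lin_tsmult lin_fun_tsmult)

lemma bilin_zero_left [simp]: "bilin f 0 y = 0"
  by (simp add: bilin_def)

lemma bilin_zero_right [simp]: "bilin f x 0 = 0"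
  by (simp add: bilin_def)

lemma bilin_diff_left: "bilin f (x - x') y = bilin f x y - bilin f x' y"
  by (simp add: bilin_def lin_diff)

lemma bilin_diff_right: "bilin f x (y - y') = bilin f x y - bilin f x y'"
  by (simp add: bilin_def lin_diff lin_fun_diff)

lemma bilin_wd_wd [simp]: "bilin f (wd v) (wd w) = f v w"
  by (simp add: bilin_def)

lemma bilin_wd_left: "bilin f (wd v) y = lin (f v) y"
  by (simp add: bilin_def)

lemma bilin_wd_right: "bilin f x (wd w) = lin (\<lambda>v. f v w) x"
  by (simp add: bilin_def)

lemma bilin_lin_left: "bilin f (lin g x) y = lin (\<lambda>v. bilin f (g v) y) x"
  by (simp add: bilin_def lin_lin)

lemma bilin_lin_right: "bilin f x (lin g y) = lin (\<lambda>w. bilin f x (g w)) y"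
  unfolding bilin_def lin_lin by (subst lin_swap) (rule refl)

lemma bilin_swap:
  assumes "\<And>v w. f v w = g w v"
  shows "bilin f x y = bilin g y x"
  unfolding bilin_def assms by (rule lin_swap)

lemma keys_bilin:
  "Poly_Mapping.keys (bilin f x y) \<subseteq>
     (\<Union>v\<in>Poly_Mapping.keys x. \<Union>w\<in>Poly_Mapping.keys y. Poly_Mapping.keys (f v w))"
  unfolding bilin_def by (rule subset_trans[OF keys_lin UN_mono[OF order_refl keys_lin]])

lemma kspan_add: "x \<in> kspan G \<Longrightarrow> y \<in> kspan G \<Longrightarrow> x + y \<in> kspan G"
proof (induction x rule: kspan.induct)
  case (kspan_step x g c)
  then show ?case using kspan.kspan_step[of "x + y" G g c] by (simp add: add.assoc)
qed simp

lemma kspan_tsmult: "x \<in> kspan G \<Longrightarrow> tsmult c x \<in> kspan G"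
proof (induction x rule: kspan.induct)
  case kspan_zero
  then show ?case by (simp add: kspan.kspan_zero)
next
  case (kspan_step x g d)
  then show ?case using kspan.kspan_step[of "tsmult c x" G g "c * d"] by (simp add: tsmult_add_right)
qed

lemma kspan_gen: "g \<in> G \<Longrightarrow> g \<in> kspan G"
  using kspan_step[OF kspan_zero, of g G 1] by simp

lemma kspan_uminus: "x \<in> kspan G \<Longrightarrow> - x \<in> kspan G"
  using kspan_tsmult[of x G "-1"] tsmult_uminus_left[of 1 x] by simp

lemma kspan_sum: "(\<And>a. a \<in> A \<Longrightarrow> f a \<in> kspan G) \<Longrightarrow> sum f A \<in> kspan G"
  by (induction A rule: infinite_finite_induct) (auto intro: kspan_add kspan.kspan_zero)

lemma kspan_mono:
  assumes "G \<subseteq> H" "x \<in> kspan G"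
  shows "x \<in> kspan H"
  using assms(2)
proof (induction x rule: kspan.induct)
  case kspan_zero
  then show ?case by (rule kspan.kspan_zero)
next
  case (kspan_step x g c)
  then show ?case using kspan.kspan_step[of x H g c] assms(1) by blast
qed

lemma kspan_lin:
  assumes "\<And>g. g \<in> G \<Longrightarrow> lin f g \<in> kspan H" "x \<in> kspan G"
  shows "lin f x \<in> kspan H"
  using assms(2)
  by (induction x rule: kspan.induct)
    (simp_all add: kspan.kspan_zero lin_add lin_tsmult kspan_add kspan_tsmult assms(1))

lemma linf_kspan:
  assumes "\<And>g. g \<in> G \<Longrightarrow> linf f g = 0" "x \<in> kspan G"
  shows "linf f x = 0"
  using assms(2) by (induction x rule: kspan.induct) (auto simp: linf_add linf_tsmult assms(1))

lemma kspan_lin_keys: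
  assumes "\<And>w. w \<in> Poly_Mapping.keys x \<Longrightarrow> f w \<in> kspan H"
  shows "lin f x \<in> kspan H"
  unfolding lin_def by (rule kspan_sum) (auto intro!: kspan_tsmult assms)

lemma lin_cong_kspan:
  assumes "\<And>w. w \<in> Poly_Mapping.keys x \<Longrightarrow> f w - g w \<in> kspan H"
  shows "lin f x - lin g x \<in> kspan H"
  unfolding lin_fun_diff[symmetric] by (rule kspan_lin_keys) (rule assms)

lemma pre_wd: "pre c (wd w) = (case w of [v] \<Rightarrow> wd [c # v] | _ \<Rightarrow> 0)"
  by (simp add: pre_def)

lemma pre_wd1 [simp]: "pre c (wd [v]) = wd [c # v]"
  by (simp add: pre_def)

lemma pre_add: "pre c (x + y) = pre c x + pre c y"
  by (simp add: pre_def lin_add)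

lemma pre_tsmult: "pre c (tsmult k x) = tsmult k (pre c x)"
  by (simp add: pre_def lin_tsmult)

lemma pre_expand: "pre c x = lin (\<lambda>w. pre c (wd w)) x"
  unfolding pre_def[of c x] by (rule lin_cong) (simp add: pre_wd)

lemma mfirst_wd: "mfirst m c (wd w) = (case w of [b # v] \<Rightarrow> wd [m c b # v] | _ \<Rightarrow> 0)"
  by (simp add: mfirst_def)

lemma mfirst_wd1 [simp]: "mfirst m c (wd [b # v]) = wd [m c b # v]"
  by (simp add: mfirst_def)

lemma mfirst_zero [simp]: "mfirst m c 0 = 0"
  by (simp add: mfirst_def)

lemma mfirst_add: "mfirst m c (x + y) = mfirst m c x + mfirst m c y"
  by (simp add: mfirst_def lin_add)

lemma mfirst_tsmult: "mfirst m c (tsmult k x) = tsmult k (mfirst m c x)"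
  by (simp add: mfirst_def lin_tsmult)

lemma mfirst_lin: "mfirst m c (lin g x) = lin (\<lambda>w. mfirst m c (g w)) x"
  by (simp add: mfirst_def lin_lin)

lemma mfirst_expand: "mfirst m c x = lin (\<lambda>w. mfirst m c (wd w)) x"
  unfolding mfirst_def[of m c x] by (rule lin_cong) (simp add: mfirst_wd)

lemma tprod_wd [simp]: "tprod (wd v) (wd w) = wd (v @ w)"
  by (simp add: tprod_def)

lemma tprod_zero_left [simp]: "tprod 0 y = 0"
  by (simp add: tprod_def)

lemma tprod_zero_right [simp]: "tprod x 0 = 0"
  by (simp add: tprod_def)

lemma tprod_add_left: "tprod (x + x') y = tprod x y + tprod x' y"
  by (simp add: tprod_def bilin_add_left)

lemma tprod_add_right: "tprod x (y + y') = tprod x y + tprod x y'"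
  by (simp add: tprod_def bilin_add_right)

lemma tprod_tsmult_left: "tprod (tsmult c x) y = tsmult c (tprod x y)"
  by (simp add: tprod_def bilin_tsmult_left)

lemma tprod_tsmult_right: "tprod x (tsmult c y) = tsmult c (tprod x y)"
  by (simp add: tprod_def bilin_tsmult_right)

lemma tprod_diff_left: "tprod (x - x') y = tprod x y - tprod x' y"
  by (simp add: tprod_def bilin_diff_left)

lemma tprod_diff_right: "tprod x (y - y') = tprod x y - tprod x y'"
  by (simp add: tprod_def bilin_diff_right)

lemma tprod_lin_left: "tprod (lin g x) y = lin (\<lambda>v. tprod (g v) y) x"
  by (simp add: tprod_def bilin_lin_left)

lemma tprod_lin_right: "tprod x (lin g y) = lin (\<lambda>w. tprod x (g w)) y"
  by (simp add: tprod_def bilin_lin_right)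

lemma tprod_expand_left: "tprod x y = lin (\<lambda>v. tprod (wd v) y) x"
  using tprod_lin_left[of wd x y] by simp

lemma tprod_expand_right: "tprod x y = lin (\<lambda>w. tprod x (wd w)) y"
  using tprod_lin_right[of x wd y] by simp

lemma tprod_nil_right [simp]: "tprod x (wd []) = x"
  by (subst tprod_expand_left) simp

lemma tprod_nil_left [simp]: "tprod (wd []) y = y"
  by (subst tprod_expand_right) simp

lemmas tprod_linear = tprod_add_left tprod_add_right tprod_tsmult_left tprod_tsmult_right

lemma tprod_assoc: "tprod (tprod x y) z = tprod x (tprod y z)"
proof (rule linear_ext_eq[where F = "\<lambda>x. tprod (tprod x y) z"])
  fix v
  show "tprod (tprod (wd v) y) z = tprod (wd v) (tprod y z)"
  proof (rule linear_ext_eq[where F = "\<lambda>y. tprod (tprod (wd v) y) z"])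
    fix w
    show "tprod (tprod (wd v) (wd w)) z = tprod (wd v) (tprod (wd w) z)"
      by (rule linear_ext_eq[where F = "\<lambda>z. tprod (tprod (wd v) (wd w)) z"]) (simp_all add: tprod_linear)
  qed (simp_all add: tprod_linear)
qed (simp_all add: tprod_linear)

lemma keys_tprod:
  "Poly_Mapping.keys (tprod x (y :: ('a,'k::comm_ring_1) tw)) \<subseteq> {v @ w | v w. v \<in> Poly_Mapping.keys x \<and> w \<in> Poly_Mapping.keys y}"
proof
  fix z assume "z \<in> Poly_Mapping.keys (tprod x y)"
  then have "z \<in> (\<Union>v\<in>Poly_Mapping.keys x. \<Union>w\<in>Poly_Mapping.keys y. Poly_Mapping.keys (wd (v @ w) :: ('a,'k) tw))"
    unfolding tprod_def by (rule subsetD[OF keys_bilin])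
  then show "z \<in> {v @ w | v w. v \<in> Poly_Mapping.keys x \<and> w \<in> Poly_Mapping.keys y}" by auto
qed

lemma tmap2_wd [simp]: "tmap2 f g (wd [v, u]) = tprod (f v) (g u)"
  by (simp add: tmap2_def)

lemma tmap2_add: "tmap2 f g (x + y) = tmap2 f g x + tmap2 f g y"
  by (simp add: tmap2_def lin_add)

lemma tmap2_tsmult: "tmap2 f g (tsmult c x) = tsmult c (tmap2 f g x)"
  by (simp add: tmap2_def lin_tsmult)

lemma tmap2_lin: "tmap2 f g (lin h x) = lin (\<lambda>w. tmap2 f g (h w)) x"
  by (simp add: tmap2_def lin_lin)

declare One_nat_def [simp del] \<comment> \<open>keeps \<open>homog 1\<close> in simp normal form\<close>

definition homog :: "nat \<Rightarrow> ('a,'k::comm_ring_1) tw \<Rightarrow> bool" where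
  "homog k x \<longleftrightarrow> (\<forall>w\<in>Poly_Mapping.keys x. length w = k \<and> [] \<notin> set w)"

definition nonempty_factors :: "('a,'k::comm_ring_1) tw \<Rightarrow> bool" where
  "nonempty_factors x \<longleftrightarrow> (\<forall>w\<in>Poly_Mapping.keys x. [] \<notin> set w)"

definition factor_len_le :: "nat \<Rightarrow> ('a,'k::comm_ring_1) tw \<Rightarrow> bool" where
  "factor_len_le n x \<longleftrightarrow> (\<forall>w\<in>Poly_Mapping.keys x. \<exists>v. w = [v] \<and> v \<noteq> [] \<and> length v \<le> n)"

lemma homog_wd [simp]: "homog k (wd w) \<longleftrightarrow> length w = k \<and> (\<forall>v\<in>set w. v \<noteq> [])"
  by (auto simp: homog_def)

lemma homog_zero [simp]: "homog k 0"
  by (simp add: homog_def)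

lemma homog_lin: "(\<And>w. w \<in> Poly_Mapping.keys x \<Longrightarrow> homog k (f w)) \<Longrightarrow> homog k (lin f x)"
  unfolding homog_def using keys_lin[of f x] by blast

lemma homog_add: "homog k x \<Longrightarrow> homog k y \<Longrightarrow> homog k (x + y)"
  unfolding homog_def using keys_add[of x y] by blast

lemma homog_tsmult: "homog k x \<Longrightarrow> homog k (tsmult c x)"
  unfolding homog_def using keys_tsmult[of c x] by blast

lemma homog_tprod:
  assumes "homog i x" "homog j y"
  shows "homog (i + j) (tprod x y)"
  unfolding homog_def
proof
  fix z assume "z \<in> Poly_Mapping.keys (tprod x y)"
  then obtain v w where "z = v @ w" "v \<in> Poly_Mapping.keys x" "w \<in> Poly_Mapping.keys y"
    using keys_tprod by blast
  then show "length z = i + j \<and> [] \<notin> set z"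
    using assms unfolding homog_def by auto
qed

lemma homog1_keys: "homog 1 x \<Longrightarrow> w \<in> Poly_Mapping.keys x \<Longrightarrow> \<exists>v. w = [v] \<and> v \<noteq> []"
  unfolding homog_def by (auto simp: One_nat_def length_Suc_conv)

lemma homog2_keys:
  "homog 2 x \<Longrightarrow> w \<in> Poly_Mapping.keys x \<Longrightarrow> \<exists>p q. w = [p, q] \<and> p \<noteq> [] \<and> q \<noteq> []"
  unfolding homog_def by (auto simp: numeral_2_eq_2 length_Suc_conv)

lemma homog_nonempty_factors: "homog k x \<Longrightarrow> nonempty_factors x"
  by (simp add: homog_def nonempty_factors_def)

lemma nonempty_factors_wd [simp]: "nonempty_factors (wd w) \<longleftrightarrow> (\<forall>v\<in>set w. v \<noteq> [])"
  by (auto simp: nonempty_factors_def)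

lemma nonempty_factors_zero [simp]: "nonempty_factors 0"
  by (simp add: nonempty_factors_def)

lemma nonempty_factors_add: "nonempty_factors x \<Longrightarrow> nonempty_factors y \<Longrightarrow> nonempty_factors (x + y)"
  unfolding nonempty_factors_def using keys_add[of x y] by blast

lemma nonempty_factors_tsmult: "nonempty_factors x \<Longrightarrow> nonempty_factors (tsmult c x)"
  unfolding nonempty_factors_def using keys_tsmult[of c x] by blast

lemma nonempty_factors_lin:
  "(\<And>w. w \<in> Poly_Mapping.keys x \<Longrightarrow> nonempty_factors (f w)) \<Longrightarrow> nonempty_factors (lin f x)"
  unfolding nonempty_factors_def using keys_lin[of f x] by blast

lemma nonempty_factors_tprod:
  assumes "nonempty_factors x" "nonempty_factors y"
  shows "nonempty_factors (tprod x y)"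
  unfolding nonempty_factors_def
proof
  fix z assume "z \<in> Poly_Mapping.keys (tprod x y)"
  then obtain v w where "z = v @ w" "v \<in> Poly_Mapping.keys x" "w \<in> Poly_Mapping.keys y"
    using keys_tprod by blast
  then show "[] \<notin> set z"
    using assms unfolding nonempty_factors_def by auto
qed

lemma factor_len_le_keys:
  "factor_len_le n x \<Longrightarrow> w \<in> Poly_Mapping.keys x \<Longrightarrow> \<exists>v. w = [v] \<and> v \<noteq> [] \<and> length v \<le> n"
  by (simp add: factor_len_le_def)

lemma factor_len_le_homog: "factor_len_le n x \<Longrightarrow> homog 1 x"
  unfolding factor_len_le_def homog_def by auto

lemma factor_len_le_wd [simp]: "factor_len_le n (wd [v]) \<longleftrightarrow> v \<noteq> [] \<and> length v \<le> n"
  by (simp add: factor_len_le_def)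

lemma homog_pre: "homog 1 (pre c x)"
  unfolding pre_def by (rule homog_lin) (auto split: list.split)

lemma factor_len_le_lin:
  "(\<And>w. w \<in> Poly_Mapping.keys x \<Longrightarrow> factor_len_le n (f w)) \<Longrightarrow> factor_len_le n (lin f x)"
  unfolding factor_len_le_def using keys_lin[of f x] by blast

lemma factor_len_le_pre: "factor_len_le n x \<Longrightarrow> factor_len_le (Suc n) (pre c x)"
  unfolding pre_def by (rule factor_len_le_lin) (auto simp: factor_len_le_def split: list.split)

lemma homog_mfirst: "homog 1 (mfirst m c x)"
  unfolding mfirst_def by (rule homog_lin) (auto split: list.split)

lemma tmap2_tprod:
  assumes "homog 1 A" "homog 1 B"
  shows "tmap2 f g (tprod A B) = tprod (lin (\<lambda>w. f (hd w)) A) (lin (\<lambda>w. g (hd w)) B)"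
proof (rule linear_ext_eq[where F = "\<lambda>A. tmap2 f g (tprod A B)"])
  fix a assume a: "a \<in> Poly_Mapping.keys A"
  show "tmap2 f g (tprod (wd a) B) = tprod (lin (\<lambda>w. f (hd w)) (wd a)) (lin (\<lambda>w. g (hd w)) B)"
  proof (rule linear_ext_eq[where F = "\<lambda>B. tmap2 f g (tprod (wd a) B)"])
    fix b assume b: "b \<in> Poly_Mapping.keys B"
    show "tmap2 f g (tprod (wd a) (wd b)) = tprod (lin (\<lambda>w. f (hd w)) (wd a)) (lin (\<lambda>w. g (hd w)) (wd b))"
      using homog1_keys[OF assms(1) a] homog1_keys[OF assms(2) b] by auto
  qed (simp_all add: tmap2_add tmap2_tsmult tprod_linear lin_add lin_tsmult)
qed (simp_all add: tmap2_add tmap2_tsmult tprod_linear lin_add lin_tsmult)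

section \<open>The generalized quasi-shuffle product\<close>

locale quasi_shuffle =
  fixes m :: "'a::ab_group_add \<Rightarrow> 'a \<Rightarrow> 'a" and e :: 'a and lam kap :: "'k::comm_ring_1"
  assumes m_assoc: "\<And>x y z. m (m x y) z = m x (m y z)"
    and m_comm: "\<And>x y. m x y = m y x"
    and m_unit: "\<And>x. m e x = x"
begin

abbreviation Q :: "'a list \<Rightarrow> 'a list \<Rightarrow> ('a,'k) tw" where "Q \<equiv> qs m e lam kap"
abbreviation W :: "'a list list \<Rightarrow> 'a list list \<Rightarrow> ('a,'k) tw" where "W \<equiv> wprod m e lam kap"
abbreviation diamond :: "('a,'k) tw \<Rightarrow> ('a,'k) tw \<Rightarrow> ('a,'k) tw" (infixl "\<diamond>" 70)
  where "x \<diamond> y \<equiv> dprod m e lam kap x y"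
abbreviation mf :: "'a \<Rightarrow> ('a,'k) tw \<Rightarrow> ('a,'k) tw" where "mf \<equiv> mfirst m"
abbreviation P :: "('a,'k) tw \<Rightarrow> ('a,'k) tw" where "P \<equiv> pre e"
abbreviation one :: "('a,'k) tw" where "one \<equiv> wd [[e]]"

lemma m_unit_right: "m x e = x"
  using m_comm m_unit by metis

lemma Q_Nil_right [simp]: "Q xs [] = 0"
  by (cases xs) simp_all

lemma homog_Q: "homog 1 (Q xs ys)"
  by (cases xs; cases ys) (simp_all add: homog_add homog_tsmult homog_pre homog_mfirst)

lemma Q_comm: "Q xs ys = Q ys xs"
proof (induction "length xs + length ys" arbitrary: xs ys rule: less_induct)
  case less
  show ?case
  proof (cases xs)
    case (Cons a xs')
    show ?thesis
    proof (cases ys)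
      case (Cons b ys')
      have "Q xs' (e # ys') = Q (e # ys') xs'" "Q (e # xs') ys' = Q ys' (e # xs')" "Q xs' ys' = Q ys' xs'"
        using less \<open>xs = a # xs'\<close> Cons by simp_all
      then show ?thesis using \<open>xs = a # xs'\<close> Cons
        by (simp add: m_comm[of a b] ac_simps)
    qed (simp add: \<open>xs = a # xs'\<close>)
  qed simp
qed

lemma mfirst_pre: "mf c (pre d x) = pre (m c d) x"
  unfolding pre_expand[of d x] pre_expand[of "m c d" x] mfirst_lin
  by (rule lin_cong) (simp add: pre_wd split: list.split)

lemma mfirst_mfirst: "mf c (mf d x) = mf (m c d) x"
  unfolding mfirst_expand[of m d x] mfirst_expand[of m "m c d" x] mfirst_lin
  by (rule lin_cong) (simp add: mfirst_wd m_assoc split: list.split)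

lemma mfirst_unit:
  assumes "homog 1 x"
  shows "mf e x = x"
proof -
  have "mf e x = lin wd x"
    unfolding mfirst_def
  proof (rule lin_cong)
    fix w assume "w \<in> Poly_Mapping.keys x"
    then obtain v where "w = [v]" "v \<noteq> []" using homog1_keys[OF assms] by blast
    then show "(case w of [b # v] \<Rightarrow> wd [m e b # v] | _ \<Rightarrow> 0) = wd w"
      by (cases v) (simp_all add: m_unit)
  qed
  then show ?thesis by simp
qed

lemma Q_mfirst: "Q (m c a # xs) ys = mf c (Q (a # xs) ys)"
  by (cases ys) (simp_all add: mfirst_add mfirst_tsmult mfirst_pre mfirst_mfirst m_assoc)

lemma W_length: "length V \<noteq> length U \<Longrightarrow> W V U = 0"
proof (induction V arbitrary: U)
  case Nil then show ?case by (cases U) auto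
next
  case (Cons v V) then show ?case by (cases U) auto
qed

lemma W_comm: "W V U = W U V"
proof (induction V arbitrary: U)
  case Nil then show ?case by (cases U) auto
next
  case (Cons v V) then show ?case by (cases U) (auto simp: Q_comm)
qed

lemma W_append: "length V = length U \<Longrightarrow> W (V @ V') (U @ U') = tprod (W V U) (W V' U')"
proof (induction V arbitrary: U)
  case Nil then show ?case by simp
next
  case (Cons v V) then show ?case by (cases U) (auto simp: tprod_assoc)
qed

lemma W_empty_factor: "[] \<in> set V \<Longrightarrow> W V U = 0"
proof (induction V arbitrary: U)
  case Nil then show ?case by simp
next
  case (Cons v V) then show ?case by (cases U) auto
qed

lemma nonempty_factors_W: "nonempty_factors (W V U)"
proof (induction V arbitrary: U)
  case Nil then show ?case by (cases U) simp_all
next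
  case (Cons v V)
  then show ?case
    by (cases U) (auto intro: nonempty_factors_tprod homog_nonempty_factors[OF homog_Q])
qed

lemma dprod_wd [simp]: "wd V \<diamond> wd U = W V U"
  by (simp add: dprod_def)

lemma dprod_add_left: "(x + x') \<diamond> y = x \<diamond> y + x' \<diamond> y"
  by (simp add: dprod_def bilin_add_left)

lemma dprod_add_right: "x \<diamond> (y + y') = x \<diamond> y + x \<diamond> y'"
  by (simp add: dprod_def bilin_add_right)

lemma dprod_tsmult_left: "tsmult c x \<diamond> y = tsmult c (x \<diamond> y)"
  by (simp add: dprod_def bilin_tsmult_left)

lemma dprod_tsmult_right: "x \<diamond> tsmult c y = tsmult c (x \<diamond> y)"
  by (simp add: dprod_def bilin_tsmult_right)

lemma dprod_zero_left [simp]: "0 \<diamond> y = 0"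
  by (simp add: dprod_def)

lemma dprod_zero_right [simp]: "x \<diamond> 0 = 0"
  by (simp add: dprod_def)

lemma dprod_diff_left: "(x - x') \<diamond> y = x \<diamond> y - x' \<diamond> y"
  by (simp add: dprod_def bilin_diff_left)

lemma dprod_diff_right: "x \<diamond> (y - y') = x \<diamond> y - x \<diamond> y'"
  by (simp add: dprod_def bilin_diff_right)

lemmas dprod_linear = dprod_add_left dprod_add_right dprod_tsmult_left dprod_tsmult_right
  dprod_diff_left dprod_diff_right

lemma dprod_lin_left: "lin g x \<diamond> y = lin (\<lambda>v. g v \<diamond> y) x"
  by (simp add: dprod_def bilin_lin_left)

lemma dprod_lin_right: "x \<diamond> lin g y = lin (\<lambda>w. x \<diamond> g w) y"
  by (simp add: dprod_def bilin_lin_right)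

lemma dprod_expand_left: "x \<diamond> y = lin (\<lambda>v. wd v \<diamond> y) x"
  using dprod_lin_left[of wd x y] by simp

lemma dprod_expand_right: "x \<diamond> y = lin (\<lambda>w. x \<diamond> wd w) y"
  using dprod_lin_right[of x wd y] by simp

lemma dprod_eq_lin_W: "x \<diamond> y = lin (\<lambda>V. lin (W V) y) x"
  by (simp add: dprod_def bilin_def)

lemma dprod_comm: "x \<diamond> y = y \<diamond> x"
  unfolding dprod_def by (rule bilin_swap) (rule W_comm)

lemma nonempty_factors_dprod: "nonempty_factors (x \<diamond> y)"
  unfolding dprod_eq_lin_W by (intro nonempty_factors_lin nonempty_factors_W)

lemma dprod_homog1_expand:
  assumes "homog 1 x" "homog 1 y"
  shows "x \<diamond> y = lin (\<lambda>w. lin (\<lambda>u. Q (hd w) (hd u)) y) x"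
proof (subst dprod_expand_left, rule lin_cong, subst dprod_expand_right, rule lin_cong)
  fix w u assume "w \<in> Poly_Mapping.keys x" "u \<in> Poly_Mapping.keys y"
  then show "wd w \<diamond> wd u = Q (hd w) (hd u)"
    using homog1_keys[OF assms(1)] homog1_keys[OF assms(2)] by force
qed

lemma homog_dprod1: "homog 1 x \<Longrightarrow> homog 1 y \<Longrightarrow> homog 1 (x \<diamond> y)"
  by (simp add: dprod_homog1_expand homog_lin homog_Q)

lemma dprod_mfirst_wd:
  assumes "q \<noteq> []"
  shows "mf a (wd v) \<diamond> wd [q] = mf a (wd v \<diamond> wd [q])"
proof (cases v rule: remdups_adj.cases)
  case (2 p)
  then show ?thesis using assms by (cases p) (simp_all add: mfirst_wd Q_mfirst[symmetric])
next
  case (3 p1 p2 r)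
  then show ?thesis using assms by (cases p1) (simp_all add: mfirst_wd)
qed (simp add: mfirst_wd)

lemma dprod_mfirst_left:
  assumes "homog 1 y"
  shows "mf a x \<diamond> y = mf a (x \<diamond> y)"
proof (rule linear_ext_eq[where F = "\<lambda>x. mf a x \<diamond> y" and G = "\<lambda>x. mf a (x \<diamond> y)"])
  fix v
  show "mf a (wd v) \<diamond> y = mf a (wd v \<diamond> y)"
  proof (rule linear_ext_eq[where F = "\<lambda>y. mf a (wd v) \<diamond> y" and G = "\<lambda>y. mf a (wd v \<diamond> y)"])
    fix w assume "w \<in> Poly_Mapping.keys y"
    then show "mf a (wd v) \<diamond> wd w = mf a (wd v \<diamond> wd w)"
      using homog1_keys[OF assms] dprod_mfirst_wd by blast
  qed (simp_all add: dprod_linear mfirst_add mfirst_tsmult)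
qed (simp_all add: dprod_linear mfirst_add mfirst_tsmult)

lemma dprod_mfirst_right: "homog 1 x \<Longrightarrow> x \<diamond> mf a y = mf a (x \<diamond> y)"
  using dprod_mfirst_left dprod_comm by metis

lemma dprod_mfirst_mfirst:
  "homog 1 x \<Longrightarrow> homog 1 y \<Longrightarrow> mf a x \<diamond> mf b y = mf (m a b) (x \<diamond> y)"
  by (simp add: dprod_mfirst_left homog_mfirst dprod_mfirst_right mfirst_mfirst m_comm)

lemma dprod_one_left:
  assumes "homog 1 y"
  shows "one \<diamond> y = y"
proof -
  have "one \<diamond> y = lin wd y"
  proof (subst dprod_expand_right, rule lin_cong)
    fix w assume "w \<in> Poly_Mapping.keys y"
    then obtain v where "w = [v]" "v \<noteq> []" using homog1_keys[OF assms] by blast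
    then show "one \<diamond> wd w = wd w" by (cases v) (simp_all add: m_unit)
  qed
  then show ?thesis by simp
qed

lemma dprod_one_right: "homog 1 y \<Longrightarrow> y \<diamond> one = y"
  using dprod_one_left dprod_comm by metis

lemma dprod_letter_left:
  assumes "homog 1 y"
  shows "wd [[a]] \<diamond> y = mf a y"
proof (subst dprod_expand_right, subst mfirst_expand, rule lin_cong)
  fix w assume "w \<in> Poly_Mapping.keys y"
  then obtain v where "w = [v]" "v \<noteq> []" using homog1_keys[OF assms] by blast
  then show "wd [[a]] \<diamond> wd w = mf a (wd w)" by (cases v) simp_all
qed

lemma P_rota_baxter:
  assumes "homog 1 x" "homog 1 y"
  shows "P x \<diamond> P y = P (x \<diamond> P y) + P (P x \<diamond> y) + tsmult lam (P (x \<diamond> y)) + tsmult kap (x \<diamond> y)"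
proof (rule bilinear_ext_eq[where F = "\<lambda>x y. P x \<diamond> P y" and
      G = "\<lambda>x y. P (x \<diamond> P y) + P (P x \<diamond> y) + tsmult lam (P (x \<diamond> y)) + tsmult kap (x \<diamond> y)"])
  fix v w assume v: "v \<in> Poly_Mapping.keys x" and w: "w \<in> Poly_Mapping.keys y"
  obtain p where p: "v = [p]" "p \<noteq> []" using homog1_keys[OF assms(1) v] by blast
  obtain q where q: "w = [q]" "q \<noteq> []" using homog1_keys[OF assms(2) w] by blast
  show "P (wd v) \<diamond> P (wd w) = P (wd v \<diamond> P (wd w)) + P (P (wd v) \<diamond> wd w) +
      tsmult lam (P (wd v \<diamond> wd w)) + tsmult kap (wd v \<diamond> wd w)"
    using p q by (simp add: m_unit mfirst_unit homog_Q)
qed (simp_all add: dprod_linear pre_add pre_tsmult tsmult_add_right ac_simps)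

lemma dprod_assoc_ext:
  assumes "\<And>v w u. v \<in> Poly_Mapping.keys x \<Longrightarrow> w \<in> Poly_Mapping.keys y \<Longrightarrow> u \<in> Poly_Mapping.keys z \<Longrightarrow>
    (wd v \<diamond> wd w) \<diamond> wd u = wd v \<diamond> (wd w \<diamond> wd u)"
  shows "(x \<diamond> y) \<diamond> z = x \<diamond> (y \<diamond> z)"
proof (rule bilinear_ext_eq[where F = "\<lambda>x y. (x \<diamond> y) \<diamond> z" and G = "\<lambda>x y. x \<diamond> (y \<diamond> z)"])
  fix v w assume v: "v \<in> Poly_Mapping.keys x" and w: "w \<in> Poly_Mapping.keys y"
  show "(wd v \<diamond> wd w) \<diamond> z = wd v \<diamond> (wd w \<diamond> z)"
  proof (rule linear_ext_eq[where F = "\<lambda>z. (wd v \<diamond> wd w) \<diamond> z" and G = "\<lambda>z. wd v \<diamond> (wd w \<diamond> z)"])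
    fix u assume "u \<in> Poly_Mapping.keys z"
    then show "(wd v \<diamond> wd w) \<diamond> wd u = wd v \<diamond> (wd w \<diamond> wd u)" using assms v w by blast
  qed (simp_all add: dprod_linear)
qed (simp_all add: dprod_linear)

lemma dprod_assoc_one:
  assumes "homog 1 x" "homog 1 y" "homog 1 z" "x = one \<or> y = one \<or> z = one"
  shows "(x \<diamond> y) \<diamond> z = x \<diamond> (y \<diamond> z)"
  using assms(4) by (auto simp: assms(1-3) dprod_one_left dprod_one_right homog_dprod1)

text \<open>The induction step for associativity: expanding both sides with the Rota-Baxter identity
  leaves only products whose factors are shorter in total.\<close>

lemma dprod_assoc_P:
  assumes x: "factor_len_le i x" and y: "factor_len_le j y" and z: "factor_len_le l z"
    and IH: "\<And>x' y' z' i' j' l'. factor_len_le i' x' \<Longrightarrow> factor_len_le j' y' \<Longrightarrow> factor_len_le l' z' \<Longrightarrow>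
      i' + j' + l' < i + j + l + 3 \<Longrightarrow> (x' \<diamond> y') \<diamond> z' = x' \<diamond> (y' \<diamond> z')"
  shows "(P x \<diamond> P y) \<diamond> P z = P x \<diamond> (P y \<diamond> P z)"
proof -
  have hx: "homog 1 x" and hy: "homog 1 y" and hz: "homog 1 z"
    using x y z by (simp_all add: factor_len_le_homog)
  have X: "factor_len_le (Suc i) (P x)" and Y: "factor_len_le (Suc j) (P y)"
    and Z: "factor_len_le (Suc l) (P z)"
    using x y z by (simp_all add: factor_len_le_pre)
  have hP: "homog 1 (P t)" for t by (rule homog_pre)
  note rb = P_rota_baxter[OF hx hy] P_rota_baxter[OF hy hz]
    P_rota_baxter[OF homog_dprod1[OF hx hP] hz] P_rota_baxter[OF homog_dprod1[OF hP hy] hz]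
    P_rota_baxter[OF homog_dprod1[OF hx hy] hz] P_rota_baxter[OF hx homog_dprod1[OF hy hP]]
    P_rota_baxter[OF hx homog_dprod1[OF hP hz]] P_rota_baxter[OF hx homog_dprod1[OF hy hz]]
  have "(x \<diamond> P y) \<diamond> P z = x \<diamond> (P y \<diamond> P z)" "(P x \<diamond> y) \<diamond> P z = P x \<diamond> (y \<diamond> P z)"
    "(x \<diamond> y) \<diamond> P z = x \<diamond> (y \<diamond> P z)" "(x \<diamond> y) \<diamond> z = x \<diamond> (y \<diamond> z)"
    "(x \<diamond> P y) \<diamond> z = x \<diamond> (P y \<diamond> z)" "(P x \<diamond> y) \<diamond> z = P x \<diamond> (y \<diamond> z)"
    "P x \<diamond> (P y \<diamond> z) = (P x \<diamond> P y) \<diamond> z"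
    by (rule IH[OF x Y Z] IH[OF X y Z] IH[OF x y Z] IH[OF x y z] IH[OF x Y z] IH[OF X y z]
        IH[OF X Y z, symmetric]; simp)+
  then show ?thesis
    by (simp add: rb dprod_linear pre_add pre_tsmult tsmult_add_right ac_simps)
qed

lemma wd_mfirst_decomp:
  assumes "a \<noteq> []"
  obtains a0 T where "wd [a] = mf a0 T" "homog 1 T"
    "T = one \<or> (\<exists>a'. T = P (wd [a']) \<and> a' \<noteq> [] \<and> length a = Suc (length a'))"
proof -
  obtain a0 a' where a: "a = a0 # a'" using assms by (cases a) auto
  show ?thesis
  proof (cases "a' = []")
    case True
    then show ?thesis using that[of a0 one] a by (simp add: m_unit_right)
  next
    case False
    show ?thesis
      by (rule that[of a0 "P (wd [a'])"]) (use a False in \<open>auto simp: m_unit_right homog_pre\<close>)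
  qed
qed

lemma dprod_assoc_words:
  "a \<noteq> [] \<Longrightarrow> b \<noteq> [] \<Longrightarrow> c \<noteq> [] \<Longrightarrow> (wd [a] \<diamond> wd [b]) \<diamond> wd [c] = wd [a] \<diamond> (wd [b] \<diamond> wd [c])"
proof (induction "length a + length b + length c" arbitrary: a b c rule: less_induct)
  case less
  have IH: "(x \<diamond> y) \<diamond> z = x \<diamond> (y \<diamond> z)"
    if "factor_len_le i x" "factor_len_le j y" "factor_len_le l z"
      "i + j + l < length a + length b + length c" for x y z i j l
  proof (rule dprod_assoc_ext)
    fix v w u assume "v \<in> Poly_Mapping.keys x" "w \<in> Poly_Mapping.keys y" "u \<in> Poly_Mapping.keys z"
    then show "(wd v \<diamond> wd w) \<diamond> wd u = wd v \<diamond> (wd w \<diamond> wd u)"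
      using that less.hyps by (force dest!: factor_len_le_keys)
  qed
  obtain a0 Ta where a: "wd [a] = mf a0 Ta" "homog 1 Ta"
    "Ta = one \<or> (\<exists>a'. Ta = P (wd [a']) \<and> a' \<noteq> [] \<and> length a = Suc (length a'))"
    using wd_mfirst_decomp[OF less.prems(1)] by blast
  obtain b0 Tb where b: "wd [b] = mf b0 Tb" "homog 1 Tb"
    "Tb = one \<or> (\<exists>b'. Tb = P (wd [b']) \<and> b' \<noteq> [] \<and> length b = Suc (length b'))"
    using wd_mfirst_decomp[OF less.prems(2)] by blast
  obtain c0 Tc where c: "wd [c] = mf c0 Tc" "homog 1 Tc"
    "Tc = one \<or> (\<exists>c'. Tc = P (wd [c']) \<and> c' \<noteq> [] \<and> length c = Suc (length c'))"
    using wd_mfirst_decomp[OF less.prems(3)] by blast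
  have "(Ta \<diamond> Tb) \<diamond> Tc = Ta \<diamond> (Tb \<diamond> Tc)"
  proof (cases "Ta = one \<or> Tb = one \<or> Tc = one")
    case True
    with a(2) b(2) c(2) show ?thesis by (rule dprod_assoc_one)
  next
    case False
    then obtain a' b' c' where abc: "Ta = P (wd [a'])" "a' \<noteq> []" "length a = Suc (length a')"
      "Tb = P (wd [b'])" "b' \<noteq> []" "length b = Suc (length b')"
      "Tc = P (wd [c'])" "c' \<noteq> []" "length c = Suc (length c')"
      using a(3) b(3) c(3) by blast
    show ?thesis
      unfolding abc(1,4,7)
    proof (rule dprod_assoc_P[of "length a'" _ "length b'" _ "length c'"])
      fix x y z :: "('a,'k) tw" and i j l
      assume "factor_len_le i x" "factor_len_le j y" "factor_len_le l z"
        "i + j + l < length a' + length b' + length c' + 3"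
      then show "(x \<diamond> y) \<diamond> z = x \<diamond> (y \<diamond> z)" using abc by (intro IH) (assumption | linarith)+
    qed (use abc in simp_all)
  qed
  then show ?case
    by (simp add: a(1) b(1) c(1) a(2) b(2) c(2) dprod_mfirst_mfirst homog_dprod1 homog_mfirst m_assoc)
qed

lemma dprod_assoc:
  assumes "homog 1 x" "homog 1 y" "homog 1 z"
  shows "(x \<diamond> y) \<diamond> z = x \<diamond> (y \<diamond> z)"
proof (rule dprod_assoc_ext)
  fix v w u assume "v \<in> Poly_Mapping.keys x" "w \<in> Poly_Mapping.keys y" "u \<in> Poly_Mapping.keys z"
  then show "(wd v \<diamond> wd w) \<diamond> wd u = wd v \<diamond> (wd w \<diamond> wd u)"
    using homog1_keys[OF assms(1)] homog1_keys[OF assms(2)] homog1_keys[OF assms(3)] dprod_assoc_words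
    by metis
qed


lemma dprod_tprod:
  assumes A: "homog k A" and A': "homog k A'"
  shows "tprod A B \<diamond> tprod A' B' = tprod (A \<diamond> A') (B \<diamond> B')"
proof (rule linear_ext_eq[where F = "\<lambda>A. tprod A B \<diamond> tprod A' B'" and G = "\<lambda>A. tprod (A \<diamond> A') (B \<diamond> B')"])
  fix a assume a: "a \<in> Poly_Mapping.keys A"
  show "tprod (wd a) B \<diamond> tprod A' B' = tprod (wd a \<diamond> A') (B \<diamond> B')"
  proof (rule linear_ext_eq[where F = "\<lambda>A'. tprod (wd a) B \<diamond> tprod A' B'" and G = "\<lambda>A'. tprod (wd a \<diamond> A') (B \<diamond> B')"])
    fix a' assume a': "a' \<in> Poly_Mapping.keys A'"
    have la: "length a = length a'" using a a' A A' by (simp add: homog_def)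
    show "tprod (wd a) B \<diamond> tprod (wd a') B' = tprod (wd a \<diamond> wd a') (B \<diamond> B')"
      by (rule bilinear_ext_eq[where F = "\<lambda>B B'. tprod (wd a) B \<diamond> tprod (wd a') B'"
            and G = "\<lambda>B B'. tprod (wd a \<diamond> wd a') (B \<diamond> B')"])
        (simp_all add: tprod_linear dprod_linear W_append la)
  qed (simp_all add: tprod_linear dprod_linear)
qed (simp_all add: tprod_linear dprod_linear)

lemma homog_dprod2: "homog 2 x \<Longrightarrow> homog 2 y \<Longrightarrow> homog 2 (x \<diamond> y)"
proof (subst dprod_expand_left, rule homog_lin, subst dprod_expand_right, rule homog_lin)
  fix w u assume "homog 2 x" "homog 2 y" "w \<in> Poly_Mapping.keys x" "u \<in> Poly_Mapping.keys y"
  then obtain p q p' q' where "w = [p, q]" "u = [p', q']"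
    using homog2_keys[of x w] homog2_keys[of y u] by blast
  then show "homog 2 (wd w \<diamond> wd u)"
    using homog_tprod[OF homog_Q homog_Q] by simp
qed

lemma dprod_assoc2:
  assumes "homog 2 x" "homog 2 y" "homog 2 z"
  shows "(x \<diamond> y) \<diamond> z = x \<diamond> (y \<diamond> z)"
proof (rule dprod_assoc_ext)
  fix v w u assume v: "v \<in> Poly_Mapping.keys x" and w: "w \<in> Poly_Mapping.keys y" and u: "u \<in> Poly_Mapping.keys z"
  obtain p1 q1 where 1: "v = [p1, q1]" "p1 \<noteq> []" "q1 \<noteq> []" using homog2_keys[OF assms(1) v] by blast
  obtain p2 q2 where 2: "w = [p2, q2]" "p2 \<noteq> []" "q2 \<noteq> []" using homog2_keys[OF assms(2) w] by blast
  obtain p3 q3 where 3: "u = [p3, q3]" "p3 \<noteq> []" "q3 \<noteq> []" using homog2_keys[OF assms(3) u] by blast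
  have t: "wd [p, q] = tprod (wd [p]) (wd [q])" for p q :: "'a list" by simp
  have W2: "W [p, q] [p', q'] = tprod (Q p p') (Q q q')" for p q p' q' by simp
  have "(wd v \<diamond> wd w) \<diamond> wd u = tprod (Q p1 p2 \<diamond> wd [p3]) (Q q1 q2 \<diamond> wd [q3])"
    unfolding 1 2 3 W2 dprod_wd by (subst t[of p3 q3], rule dprod_tprod[OF homog_Q]) (use 3 in simp)
  also have "\<dots> = tprod (wd [p1] \<diamond> Q p2 p3) (wd [q1] \<diamond> Q q2 q3)"
    using dprod_assoc[of "wd [p1]" "wd [p2]" "wd [p3]"] dprod_assoc[of "wd [q1]" "wd [q2]" "wd [q3]"] 1 2 3
    by simp
  also have "\<dots> = wd v \<diamond> (wd w \<diamond> wd u)"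
    unfolding 1 2 3 W2 dprod_wd by (subst t[of p1 q1], rule dprod_tprod[OF _ homog_Q, symmetric]) (use 1 in simp)
  finally show "(wd v \<diamond> wd w) \<diamond> wd u = wd v \<diamond> (wd w \<diamond> wd u)" .
qed

lemma dprod_swap2:
  assumes "homog 2 a" "homog 2 b" "homog 2 c" "homog 2 d"
  shows "(a \<diamond> b) \<diamond> (c \<diamond> d) = (a \<diamond> c) \<diamond> (b \<diamond> d)"
proof -
  have "(a \<diamond> b) \<diamond> (c \<diamond> d) = a \<diamond> (b \<diamond> (c \<diamond> d))"
    by (rule dprod_assoc2[OF assms(1,2) homog_dprod2[OF assms(3,4)]])
  also have "b \<diamond> (c \<diamond> d) = (b \<diamond> c) \<diamond> d"
    by (rule dprod_assoc2[OF assms(2,3,4), symmetric])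
  also have "b \<diamond> c = c \<diamond> b" by (rule dprod_comm)
  also have "(c \<diamond> b) \<diamond> d = c \<diamond> (b \<diamond> d)"
    by (rule dprod_assoc2[OF assms(3,2,4)])
  also have "a \<diamond> (c \<diamond> (b \<diamond> d)) = (a \<diamond> c) \<diamond> (b \<diamond> d)"
    by (rule dprod_assoc2[OF assms(1,3) homog_dprod2[OF assms(2,4)], symmetric])
  finally show ?thesis .
qed

lemma dprod_one2_left:
  assumes "homog 2 y"
  shows "wd [[e], [e]] \<diamond> y = y"
proof -
  have "wd [[e], [e]] \<diamond> y = lin wd y"
  proof (subst dprod_expand_right, rule lin_cong)
    fix w assume "w \<in> Poly_Mapping.keys y"
    then obtain p q where "w = [p, q]" "p \<noteq> []" "q \<noteq> []" using homog2_keys[OF assms] by blast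
    then show "wd [[e], [e]] \<diamond> wd w = wd w" by (cases p; cases q) (simp_all add: m_unit)
  qed
  then show ?thesis by simp
qed

end

section \<open>Compatibility with the multilinearity relations\<close>

text \<open>All maps below are defined on words
  and never produce an empty factor, so it suffices to show that they preserve \<open>mlin_span\<close>.\<close>

locale quasi_shuffle_tensor = quasi_shuffle m e lam kap
  for m :: "'a::ab_group_add \<Rightarrow> 'a \<Rightarrow> 'a" and e :: 'a and lam kap :: "'k::comm_ring_1" +
  fixes s :: "'k \<Rightarrow> 'a \<Rightarrow> 'a"
  assumes m_add_left: "\<And>x y z. m (x + y) z = m x z + m y z"
    and m_add_right: "\<And>x y z. m x (y + z) = m x y + m x z"
    and m_scale_left: "\<And>c x y. m (s c x) y = s c (m x y)"
    and m_scale_right: "\<And>c x y. m x (s c y) = s c (m x y)"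
begin

definition mlin_rels :: "('a,'k) tw set" where
  "mlin_rels =
     {wd (us @ (xs @ (x + y) # ys) # vs) - wd (us @ (xs @ x # ys) # vs) - wd (us @ (xs @ y # ys) # vs)
       | us xs x y ys vs. True}
   \<union> {wd (us @ (xs @ s c x # ys) # vs) - tsmult c (wd (us @ (xs @ x # ys) # vs))
       | us xs c x ys vs. True}"

abbreviation mlin_span :: "('a,'k) tw set" where "mlin_span \<equiv> kspan mlin_rels"

definition mlin_eq :: "('a,'k) tw \<Rightarrow> ('a,'k) tw \<Rightarrow> bool" (infix "\<approx>" 50) where
  "x \<approx> y \<longleftrightarrow> x - y \<in> mlin_span"

lemma tensor_rels_eq: "tensor_rels s = mlin_rels \<union> {wd w | w. [] \<in> set w}"
  unfolding tensor_rels_def mlin_rels_def by blast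

lemma mlin_eq_teq: "x \<approx> y \<Longrightarrow> teq s x y"
  unfolding mlin_eq_def teq_def using kspan_mono[of mlin_rels "tensor_rels s"] by (auto simp: tensor_rels_eq)

lemma mlin_eq_refl [simp]: "x \<approx> x"
  by (simp add: mlin_eq_def kspan_zero)

lemma mlin_eq_sym: "x \<approx> y \<Longrightarrow> y \<approx> x"
  unfolding mlin_eq_def using kspan_uminus by fastforce

lemma mlin_eq_trans [trans]: "x \<approx> y \<Longrightarrow> y \<approx> z \<Longrightarrow> x \<approx> z"
  unfolding mlin_eq_def using kspan_add by fastforce

lemma mlin_eq_eq_trans [trans]: "x \<approx> y \<Longrightarrow> y = z \<Longrightarrow> x \<approx> z"
  by simp

lemma eq_mlin_eq_trans [trans]: "x = y \<Longrightarrow> y \<approx> z \<Longrightarrow> x \<approx> z"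
  by simp

lemma mlin_eq_add: "x \<approx> x' \<Longrightarrow> y \<approx> y' \<Longrightarrow> x + y \<approx> x' + y'"
  unfolding mlin_eq_def using kspan_add[of "x - x'" _ "y - y'"] by (simp add: algebra_simps)

lemma mlin_eq_tsmult: "x \<approx> x' \<Longrightarrow> tsmult c x \<approx> tsmult c x'"
  unfolding mlin_eq_def using kspan_tsmult[of "x - x'" _ c] by (simp add: tsmult_diff_right)

lemma mlin_eq_lin_cong: "(\<And>w. w \<in> Poly_Mapping.keys x \<Longrightarrow> f w \<approx> g w) \<Longrightarrow> lin f x \<approx> lin g x"
  unfolding mlin_eq_def by (rule lin_cong_kspan)

lemma linear_ext_mlin_eq:
  assumes "\<And>x y. F (x + y) = F x + F y" "\<And>c x. F (tsmult c x) = tsmult c (F x)"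
    and "\<And>x y. G (x + y) = G x + G y" "\<And>c x. G (tsmult c x) = tsmult c (G x)"
    and "\<And>w. w \<in> Poly_Mapping.keys x \<Longrightarrow> F (wd w) \<approx> G (wd w)"
  shows "F x \<approx> G x"
proof -
  have "F x = lin (\<lambda>w. F (wd w)) x" by (rule linear_eq_lin) (simp_all add: assms)
  also have "\<dots> \<approx> lin (\<lambda>w. G (wd w)) x" by (rule mlin_eq_lin_cong) (simp add: assms)
  also have "\<dots> = G x" by (rule linear_eq_lin[symmetric]) (simp_all add: assms)
  finally show ?thesis .
qed

lemma bilinear_ext_mlin_eq:
  assumes "\<And>x x' y. F (x + x') y = F x y + F x' y" "\<And>c x y. F (tsmult c x) y = tsmult c (F x y)"
    and "\<And>x y y'. F x (y + y') = F x y + F x y'" "\<And>c x y. F x (tsmult c y) = tsmult c (F x y)"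
    and "\<And>x x' y. G (x + x') y = G x y + G x' y" "\<And>c x y. G (tsmult c x) y = tsmult c (G x y)"
    and "\<And>x y y'. G x (y + y') = G x y + G x y'" "\<And>c x y. G x (tsmult c y) = tsmult c (G x y)"
    and "\<And>v w. v \<in> Poly_Mapping.keys x \<Longrightarrow> w \<in> Poly_Mapping.keys y \<Longrightarrow> F (wd v) (wd w) \<approx> G (wd v) (wd w)"
  shows "F x y \<approx> G x y"
proof (rule linear_ext_mlin_eq[where F = "\<lambda>x. F x y" and G = "\<lambda>x. G x y"])
  fix v assume v: "v \<in> Poly_Mapping.keys x"
  show "F (wd v) y \<approx> G (wd v) y"
    by (rule linear_ext_mlin_eq[where F = "F (wd v)" and G = "G (wd v)"]) (simp_all add: assms v)
qed (simp_all add: assms)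

definition letter_linear :: "('a \<Rightarrow> ('a,'k) tw) \<Rightarrow> bool" where
  "letter_linear f \<longleftrightarrow> (\<forall>x y. f (x + y) \<approx> f x + f y) \<and> (\<forall>c x. f (s c x) \<approx> tsmult c (f x))"

definition multilinear :: "('a list list \<Rightarrow> ('a,'k) tw) \<Rightarrow> bool" where
  "multilinear F \<longleftrightarrow> (\<forall>us xs ys vs. letter_linear (\<lambda>x. F (us @ (xs @ x # ys) # vs)))"

lemma letter_linear_wd: "letter_linear (\<lambda>x. wd (us @ (xs @ x # ys) # vs))"
proof -
  have "wd (us @ (xs @ (x + y) # ys) # vs) - wd (us @ (xs @ x # ys) # vs) - wd (us @ (xs @ y # ys) # vs)
      \<in> mlin_rels"
    "wd (us @ (xs @ s c x # ys) # vs) - tsmult c (wd (us @ (xs @ x # ys) # vs)) \<in> mlin_rels" for x y c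
    unfolding mlin_rels_def by blast+
  then show ?thesis
    unfolding letter_linear_def mlin_eq_def by (auto simp: diff_diff_eq[symmetric] intro: kspan_gen)
qed

lemma letter_linear_wd1: "letter_linear (\<lambda>x. wd [xs @ x # ys])"
  using letter_linear_wd[of "[]" xs ys "[]"] by simp

lemma letter_linear_wd_Cons: "letter_linear (\<lambda>x. wd [x # ys])"
  using letter_linear_wd1[of "[]" ys] by simp

lemma letter_linear_zero: "letter_linear (\<lambda>x. 0)"
  by (simp add: letter_linear_def)

lemma letter_linear_add:
  "letter_linear f \<Longrightarrow> letter_linear g \<Longrightarrow> letter_linear (\<lambda>x. f x + g x)"
  unfolding letter_linear_def
  by (metis (no_types, lifting) add.assoc add.left_commute mlin_eq_add tsmult_add_right)

lemma letter_linear_tsmult: "letter_linear f \<Longrightarrow> letter_linear (\<lambda>x. tsmult c (f x))"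
  unfolding letter_linear_def
  by (metis mlin_eq_tsmult mult.commute tsmult_add_right tsmult_tsmult)

lemma letter_linear_comp:
  assumes "letter_linear f" "\<And>x y. h (x + y) = h x + h y" "\<And>c x. h (s c x) = s c (h x)"
  shows "letter_linear (\<lambda>x. f (h x))"
  using assms unfolding letter_linear_def by simp

lemma letter_linear_map:
  assumes "letter_linear f"
    and "\<And>x y. L (x + y) = L x + L y" "\<And>c x. L (tsmult c x) = tsmult c (L x)"
    and "\<And>x y. x \<approx> y \<Longrightarrow> L x \<approx> L y"
  shows "letter_linear (\<lambda>x. L (f x))"
  using assms unfolding letter_linear_def by metis

lemma letter_linear_scalar:
  assumes "\<And>x y. \<phi> (x + y) = \<phi> x + \<phi> y" "\<And>c x. \<phi> (s c x) = c * \<phi> x"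
  shows "letter_linear (\<lambda>x. tsmult (\<phi> x) T)"
  by (simp add: letter_linear_def assms tsmult_add_left)

lemma letter_linear_lin:
  assumes "\<And>w. letter_linear (\<lambda>x. G x w)"
  shows "letter_linear (\<lambda>x. lin (G x) T)"
  unfolding letter_linear_def lin_fun_add[symmetric] lin_fun_tsmult[symmetric]
  using assms unfolding letter_linear_def by (blast intro: mlin_eq_lin_cong)

lemma multilinear_lin:
  assumes "\<And>U. multilinear (\<lambda>V. G V U)"
  shows "multilinear (\<lambda>V. lin (G V) y)"
  unfolding multilinear_def
proof (intro allI letter_linear_lin)
  fix us xs ys vs U
  show "letter_linear (\<lambda>x. G (us @ (xs @ x # ys) # vs) U)"
    using assms unfolding multilinear_def by blast
qed

lemma lin_mlin_span:
  assumes "multilinear F" "g \<in> mlin_span"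
  shows "lin F g \<in> mlin_span"
proof (rule kspan_lin[OF _ assms(2)])
  fix r assume "r \<in> mlin_rels"
  then consider us xs x y ys vs where "r = wd (us @ (xs @ (x + y) # ys) # vs)
      - wd (us @ (xs @ x # ys) # vs) - wd (us @ (xs @ y # ys) # vs)"
    | us xs c x ys vs where "r = wd (us @ (xs @ s c x # ys) # vs) - tsmult c (wd (us @ (xs @ x # ys) # vs))"
    unfolding mlin_rels_def by blast
  then show "lin F r \<in> mlin_span"
  proof cases
    case (1 us xs x y ys vs)
    have "F (us @ (xs @ (x + y) # ys) # vs) \<approx> F (us @ (xs @ x # ys) # vs) + F (us @ (xs @ y # ys) # vs)"
      using assms(1) unfolding multilinear_def letter_linear_def by blast
    then show ?thesis using 1 by (simp add: lin_diff lin_add mlin_eq_def diff_diff_eq)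
  next
    case (2 us xs c x ys vs)
    have "F (us @ (xs @ s c x # ys) # vs) \<approx> tsmult c (F (us @ (xs @ x # ys) # vs))"
      using assms(1) unfolding multilinear_def letter_linear_def by blast
    then show ?thesis using 2 by (simp add: lin_diff lin_tsmult mlin_eq_def)
  qed
qed

lemma lin_mlin_eq: "multilinear F \<Longrightarrow> x \<approx> y \<Longrightarrow> lin F x \<approx> lin F y"
  unfolding mlin_eq_def using lin_mlin_span[of F "x - y"] by (simp add: lin_diff)

lemma lin_tensor_rels:
  assumes "multilinear F" "\<And>w. [] \<in> set w \<Longrightarrow> F w = 0" "g \<in> kspan (tensor_rels s)"
  shows "lin F g \<in> mlin_span"
proof (rule kspan_lin[OF _ assms(3)])
  fix r assume "r \<in> tensor_rels s"
  then consider "r \<in> mlin_rels" | w where "r = wd w" "[] \<in> set w"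
    unfolding tensor_rels_eq by blast
  then show "lin F r \<in> mlin_span"
  proof cases
    case 1
    then show ?thesis by (rule lin_mlin_span[OF assms(1) kspan_gen])
  qed (simp add: assms(2) kspan_zero)
qed

lemma lin_teq_mlin_eq:
  "multilinear F \<Longrightarrow> (\<And>w. [] \<in> set w \<Longrightarrow> F w = 0) \<Longrightarrow> teq s x y \<Longrightarrow> lin F x \<approx> lin F y"
  unfolding teq_def mlin_eq_def using lin_tensor_rels[of F "x - y"] by (simp add: lin_diff)

lemma tprod_mlin_span_left: "g \<in> mlin_span \<Longrightarrow> tprod g y \<in> mlin_span"
proof (subst tprod_expand_right, rule kspan_lin_keys)
  fix w assume "g \<in> mlin_span"
  moreover have "multilinear (\<lambda>v. wd (v @ w))"
    using letter_linear_wd[of _ _ _ "_ @ w"] by (simp add: multilinear_def)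
  ultimately show "tprod g (wd w) \<in> mlin_span"
    unfolding tprod_def bilin_wd_right by (rule lin_mlin_span[rotated])
qed

lemma tprod_mlin_span_right: "g \<in> mlin_span \<Longrightarrow> tprod x g \<in> mlin_span"
proof (subst tprod_expand_left, rule kspan_lin_keys)
  fix w assume "g \<in> mlin_span"
  moreover have "multilinear (\<lambda>v. wd (w @ v))"
    using letter_linear_wd[of "w @ _"] by (simp add: multilinear_def)
  ultimately show "tprod (wd w) g \<in> mlin_span"
    unfolding tprod_def bilin_wd_left by (rule lin_mlin_span[rotated])
qed

lemma mlin_eq_tprod: "x \<approx> x' \<Longrightarrow> y \<approx> y' \<Longrightarrow> tprod x y \<approx> tprod x' y'"
proof -
  assume "x \<approx> x'" "y \<approx> y'"
  then have "tprod (x - x') y + tprod x' (y - y') \<in> mlin_span"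
    unfolding mlin_eq_def by (intro kspan_add tprod_mlin_span_left tprod_mlin_span_right)
  then show ?thesis by (simp add: mlin_eq_def tprod_diff_left tprod_diff_right)
qed

lemma multilinear_single_factor:
  assumes "\<And>xs ys. letter_linear (\<lambda>x. F [xs @ x # ys])" "\<And>w. length w \<noteq> 1 \<Longrightarrow> F w = 0"
  shows "multilinear F"
  unfolding multilinear_def
proof (intro allI)
  fix us vs :: "'a list list" and xs ys :: "'a list"
  show "letter_linear (\<lambda>x. F (us @ (xs @ x # ys) # vs))"
  proof (cases "us = [] \<and> vs = []")
    case False
    then have "F (us @ (xs @ x # ys) # vs) = 0" for x by (intro assms(2)) (cases us; cases vs; simp)
    then show ?thesis by (simp add: letter_linear_zero)
  qed (simp add: assms(1))
qed

lemma multilinear_pre_word: "multilinear (\<lambda>w. case w of [v] \<Rightarrow> wd [c # v] | _ \<Rightarrow> 0)"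
  by (rule multilinear_single_factor)
    (use letter_linear_wd1[of "c # _"] in \<open>auto split: list.split\<close>)

lemma mlin_eq_pre: "x \<approx> y \<Longrightarrow> pre c x \<approx> pre c y"
  unfolding pre_def by (rule lin_mlin_eq[OF multilinear_pre_word])

lemma letter_linear_pre: "letter_linear (\<lambda>c. pre c T)"
  unfolding pre_def
proof (rule letter_linear_lin)
  fix w :: "'a list list"
  show "letter_linear (\<lambda>c. case w of [v] \<Rightarrow> wd [c # v] | _ \<Rightarrow> 0)"
    using letter_linear_wd_Cons letter_linear_zero by (cases w rule: remdups_adj.cases) simp_all
qed

lemma multilinear_mfirst_word: "multilinear (\<lambda>w. case w of [b # v] \<Rightarrow> wd [m c b # v] | _ \<Rightarrow> 0)"
proof (rule multilinear_single_factor)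
  fix xs ys :: "'a list"
  have "letter_linear (\<lambda>x. wd [m c x # ys])"
    using letter_linear_comp[OF letter_linear_wd_Cons, of "m c"] by (simp add: m_add_right m_scale_right)
  then show "letter_linear (\<lambda>x. case [xs @ x # ys] of [b # v] \<Rightarrow> wd [m c b # v] | _ \<Rightarrow> 0)"
    using letter_linear_wd1[of "m c (hd xs) # tl xs" ys] by (cases xs) simp_all
qed (auto split: list.split)

lemma mlin_eq_mfirst: "x \<approx> y \<Longrightarrow> mf c x \<approx> mf c y"
  unfolding mfirst_def by (rule lin_mlin_eq[OF multilinear_mfirst_word])

lemma letter_linear_mfirst: "letter_linear (\<lambda>c. mf c T)"
  unfolding mfirst_def
proof (rule letter_linear_lin)
  fix w :: "'a list list"
  have wd: "letter_linear (\<lambda>c. wd [m c b # v])" for b v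
    using letter_linear_comp[OF letter_linear_wd_Cons, of "\<lambda>c. m c b"] by (simp add: m_add_left m_scale_left)
  show "letter_linear (\<lambda>c. case w of [b # v] \<Rightarrow> wd [m c b # v] | _ \<Rightarrow> 0)"
  proof (cases w rule: remdups_adj.cases)
    case (2 v)
    then show ?thesis using wd by (cases v) (simp_all add: letter_linear_zero)
  next
    case (3 u v rest)
    then show ?thesis by (cases u) (simp_all add: letter_linear_zero)
  qed (simp add: letter_linear_zero)
qed

lemma letter_linear_m_left:
  "letter_linear f \<Longrightarrow> letter_linear (\<lambda>x. f (m x b))"
  by (rule letter_linear_comp) (simp_all add: m_add_left m_scale_left)

lemma letter_linear_pre_map: "letter_linear f \<Longrightarrow> letter_linear (\<lambda>x. pre c (f x))"
  by (rule letter_linear_map) (simp_all add: pre_add pre_tsmult mlin_eq_pre)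

lemma letter_linear_mfirst_map: "letter_linear f \<Longrightarrow> letter_linear (\<lambda>x. mf c (f x))"
  by (rule letter_linear_map) (simp_all add: mfirst_add mfirst_tsmult mlin_eq_mfirst)

lemma letter_linear_Q: "letter_linear (\<lambda>x. Q (xs @ x # ys) w)"
proof (induction "length xs + length w" arbitrary: xs w rule: less_induct)
  case less
  show ?case
  proof (cases w)
    case Nil
    then show ?thesis by (simp add: letter_linear_zero)
  next
    case (Cons b w')
    show ?thesis
    proof (cases xs)
      case Nil
      have "letter_linear (\<lambda>x. wd [m x b # zs])" for zs
        by (rule letter_linear_m_left[OF letter_linear_wd_Cons])
      moreover have "letter_linear (\<lambda>x. pre (m x b) T)" "letter_linear (\<lambda>x. mf (m x b) T)" for T
        by (rule letter_linear_m_left[OF letter_linear_pre] letter_linear_m_left[OF letter_linear_mfirst])+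
      ultimately show ?thesis
        using Nil Cons by (cases "ys = []"; cases "w' = []") (simp_all add: letter_linear_add letter_linear_tsmult)
    next
      case (Cons a xs')
      have "letter_linear (\<lambda>x. Q (xs' @ x # ys) (e # w'))" "letter_linear (\<lambda>x. Q (xs' @ x # ys) w')"
        "letter_linear (\<lambda>x. Q ((e # xs') @ x # ys) w')"
        using less[of xs' "e # w'"] less[of xs' w'] less[of "e # xs'" w'] Cons \<open>w = b # w'\<close> by simp_all
      then show ?thesis
        using Cons \<open>w = b # w'\<close> letter_linear_wd1[of "m a b # xs'" ys] by (cases "w' = []")
          (simp_all add: letter_linear_add letter_linear_tsmult letter_linear_pre_map letter_linear_mfirst_map)
    qed
  qed
qed

lemma multilinear_W: "multilinear (\<lambda>V. W V U)"
  unfolding multilinear_def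
proof (intro allI)
  fix us xs ys vs
  show "letter_linear (\<lambda>x. W (us @ (xs @ x # ys) # vs) U)"
  proof (cases "length U = Suc (length us + length vs)")
    case True
    then obtain U1 u U2 where U: "U = U1 @ u # U2" "length U1 = length us"
      by (metis id_take_nth_drop length_take less_add_Suc1 min.absorb4)
    have "letter_linear (\<lambda>x. tprod (W us U1) (tprod (Q (xs @ x # ys) u) (W vs U2)))"
      by (intro letter_linear_map[OF letter_linear_Q])
        (simp_all add: tprod_linear mlin_eq_tprod)
    then show ?thesis using U by (simp add: W_append)
  qed (simp add: W_length letter_linear_zero)
qed

lemma dprod_mlin_span_left: "g \<in> mlin_span \<Longrightarrow> g \<diamond> y \<in> mlin_span"
  unfolding dprod_eq_lin_W by (rule lin_mlin_span[OF multilinear_lin[OF multilinear_W]])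

lemma mlin_eq_dprod: "x \<approx> x' \<Longrightarrow> y \<approx> y' \<Longrightarrow> x \<diamond> y \<approx> x' \<diamond> y'"
proof -
  assume "x \<approx> x'" "y \<approx> y'"
  then have "(x - x') \<diamond> y + (y - y') \<diamond> x' \<in> mlin_span"
    unfolding mlin_eq_def by (intro kspan_add dprod_mlin_span_left)
  then show ?thesis by (simp add: mlin_eq_def dprod_linear dprod_comm[of _ x'])
qed

lemma teq_dprod_left: "teq s x x' \<Longrightarrow> x \<diamond> y \<approx> x' \<diamond> y"
  unfolding dprod_eq_lin_W
  by (rule lin_teq_mlin_eq[OF multilinear_lin[OF multilinear_W]]) (simp add: W_empty_factor)

lemma teq_dprod_right: "teq s y y' \<Longrightarrow> x \<diamond> y \<approx> x \<diamond> y'"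
  using teq_dprod_left dprod_comm by metis

definition drop_empty :: "('a,'k) tw \<Rightarrow> ('a,'k) tw" where
  "drop_empty x = lin (\<lambda>w. if [] \<in> set w then 0 else wd w) x"

lemma multilinear_drop_empty_word: "multilinear (\<lambda>w. if [] \<in> set w then 0 else wd w)"
  unfolding multilinear_def
proof (intro allI)
  fix us vs :: "'a list list" and xs ys :: "'a list"
  show "letter_linear (\<lambda>x. if [] \<in> set (us @ (xs @ x # ys) # vs) then 0 else wd (us @ (xs @ x # ys) # vs))"
    using letter_linear_wd letter_linear_zero by (cases "[] \<in> set us \<or> [] \<in> set vs") simp_all
qed

lemma drop_empty_id: "nonempty_factors x \<Longrightarrow> drop_empty x = x"
proof -
  assume "nonempty_factors x"
  then have "drop_empty x = lin wd x"
    unfolding drop_empty_def nonempty_factors_def by (intro lin_cong) simp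
  then show ?thesis by simp
qed

lemma teq_mlin_eq: "teq s x y \<Longrightarrow> nonempty_factors x \<Longrightarrow> nonempty_factors y \<Longrightarrow> x \<approx> y"
  using lin_teq_mlin_eq[OF multilinear_drop_empty_word, of x y] drop_empty_id
  unfolding drop_empty_def by simp


lemma teq_lin_cong: "(\<And>w. w \<in> Poly_Mapping.keys x \<Longrightarrow> teq s (f w) (g w)) \<Longrightarrow> teq s (lin f x) (lin g x)"
  unfolding teq_def by (rule lin_cong_kspan)

lemma teq_refl: "teq s x x"
  by (simp add: teq_def kspan_zero)

lemma teq_empty_factor:
  assumes "[] \<in> set w"
  shows "teq s 0 (wd w)"
proof -
  have "wd w \<in> tensor_rels s" using assms by (auto simp: tensor_rels_eq)
  then show ?thesis unfolding teq_def using kspan_uminus[OF kspan_gen] by simp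
qed

lemma Sh_keys: "x \<in> Sh \<Longrightarrow> w \<in> Poly_Mapping.keys x \<Longrightarrow> \<exists>v. w = [v]"
  by (simp add: Sh_def)

lemma teq_tsmult: "teq s x y \<Longrightarrow> teq s (tsmult c x) (tsmult c y)"
  unfolding teq_def using kspan_tsmult[of "x - y" _ c] by (simp add: tsmult_diff_right)

lemma homog_Sh: "homog 1 x \<Longrightarrow> x \<in> Sh"
  unfolding Sh_def using homog1_keys by blast

lemma homog_drop_empty:
  assumes "x \<in> Sh"
  shows "homog 1 (drop_empty x)"
  unfolding drop_empty_def
proof (rule homog_lin)
  fix w assume "w \<in> Poly_Mapping.keys x"
  then obtain v where "w = [v]" using Sh_keys[OF assms] by blast
  then show "homog 1 (if [] \<in> set w then 0 else wd w)" by simp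
qed

lemma teq_drop_empty: "teq s (drop_empty x) x"
proof -
  have "drop_empty x - x = lin (\<lambda>w. (if [] \<in> set w then 0 else wd w) - wd w) x"
    by (simp add: drop_empty_def lin_fun_diff)
  also have "\<dots> \<in> kspan (tensor_rels s)"
  proof (rule kspan_lin_keys)
    fix w
    show "(if [] \<in> set w then 0 else wd w) - wd w \<in> kspan (tensor_rels s)"
      using teq_empty_factor[of w] by (simp add: teq_def kspan_zero)
  qed
  finally show ?thesis by (simp add: teq_def)
qed

lemma dprod_empty_factor:
  assumes "[] \<in> set w"
  shows "wd w \<diamond> y = 0"
proof -
  have "W w = (\<lambda>_. 0)" using assms by (intro ext) (simp add: W_empty_factor)
  then show ?thesis by (simp add: dprod_eq_lin_W)
qed

lemma dprod_drop_empty_left: "drop_empty x \<diamond> y = x \<diamond> y"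
  unfolding drop_empty_def dprod_lin_left
  by (subst (2) dprod_expand_left, rule lin_cong) (simp add: dprod_empty_factor)

lemma dprod_drop_empty_right: "x \<diamond> drop_empty y = x \<diamond> y"
  using dprod_drop_empty_left dprod_comm by metis

lemma dprod_Sh: "x \<in> Sh \<Longrightarrow> y \<in> Sh \<Longrightarrow> x \<diamond> y \<in> Sh"
  using homog_Sh[OF homog_dprod1[OF homog_drop_empty homog_drop_empty]]
  by (simp add: dprod_drop_empty_left dprod_drop_empty_right)

lemma dprod_assoc_Sh:
  assumes "x \<in> Sh" "y \<in> Sh" "z \<in> Sh"
  shows "(x \<diamond> y) \<diamond> z = x \<diamond> (y \<diamond> z)"
proof -
  have "(x \<diamond> y) \<diamond> z = (drop_empty x \<diamond> drop_empty y) \<diamond> drop_empty z"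
    by (simp only: dprod_drop_empty_left dprod_drop_empty_right)
  also have "\<dots> = drop_empty x \<diamond> (drop_empty y \<diamond> drop_empty z)"
    by (rule dprod_assoc) (simp_all add: homog_drop_empty assms)
  also have "\<dots> = x \<diamond> (y \<diamond> z)"
    by (simp only: dprod_drop_empty_left dprod_drop_empty_right)
  finally show ?thesis .
qed

lemma ue_dprod_Sh:
  assumes "x \<in> Sh"
  shows "teq s (ue e c \<diamond> x) (tsmult c x)"
proof -
  have "ue e c \<diamond> x = tsmult c (drop_empty x)"
    using dprod_one_left[OF homog_drop_empty[OF assms]]
    by (simp add: ue_def dprod_tsmult_left dprod_drop_empty_right)
  then show ?thesis by (simp add: teq_tsmult teq_drop_empty)
qed

lemma dprod_ue_Sh: "x \<in> Sh \<Longrightarrow> teq s (x \<diamond> ue e c) (tsmult c x)"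
  using ue_dprod_Sh dprod_comm by metis

end

section \<open>The counit and the comultiplication\<close>

locale ext_rb_bialgebra = quasi_shuffle_tensor m e lam kap s
  for m :: "'a::ab_group_add \<Rightarrow> 'a \<Rightarrow> 'a" and e :: 'a and lam kap :: "'k::comm_ring_1"
    and s :: "'k \<Rightarrow> 'a \<Rightarrow> 'a" +
  fixes DA :: "'a \<Rightarrow> ('a,'k) tw" and epsA :: "'a \<Rightarrow> 'k" and mu :: 'k
  assumes root: "mu ^ 2 - lam * mu + kap = 0"
    and DA_shape: "\<And>x. \<forall>w\<in>Poly_Mapping.keys (DA x). \<exists>a b. w = [[a], [b]]"
    and DA_add: "\<And>x y. teq s (DA (x + y)) (DA x + DA y)"
    and DA_scale: "\<And>c x. teq s (DA (s c x)) (tsmult c (DA x))"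
    and epsA_add: "\<And>x y. epsA (x + y) = epsA x + epsA y"
    and epsA_scale: "\<And>c x. epsA (s c x) = c * epsA x"
    and coassoc_A: "\<And>x. teq s
          (tmap2 (\<lambda>v. case v of [a] \<Rightarrow> DA a | _ \<Rightarrow> 0) (\<lambda>v. wd [v]) (DA x))
          (tmap2 (\<lambda>v. wd [v]) (\<lambda>v. case v of [a] \<Rightarrow> DA a | _ \<Rightarrow> 0) (DA x))"
    and counit_A_left: "\<And>x. teq s
          (tmap2 (\<lambda>v. case v of [a] \<Rightarrow> tsmult (epsA a) (wd []) | _ \<Rightarrow> 0) (\<lambda>v. wd [v]) (DA x))
          (wd [[x]])"
    and counit_A_right: "\<And>x. teq s
          (tmap2 (\<lambda>v. wd [v]) (\<lambda>v. case v of [a] \<Rightarrow> tsmult (epsA a) (wd []) | _ \<Rightarrow> 0) (DA x))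
          (wd [[x]])"
    and DA_mult: "\<And>x y. teq s (DA (m x y)) (dprod m e lam kap (DA x) (DA y))"
    and DA_unit: "teq s (DA e) (wd [[e], [e]])"
    and epsA_mult: "\<And>x y. epsA (m x y) = epsA x * epsA y"
    and epsA_unit: "epsA e = 1"
begin

abbreviation eps_w :: "'a list \<Rightarrow> 'k" where "eps_w \<equiv> epsw epsA mu"
abbreviation eps :: "('a,'k) tw \<Rightarrow> 'k" where "eps \<equiv> epse epsA mu"
abbreviation PB :: "('a,'k) tw \<Rightarrow> ('a,'k) tw" where "PB \<equiv> Pbar e epsA mu"
abbreviation Delta_w :: "'a list \<Rightarrow> ('a,'k) tw" where "Delta_w \<equiv> Dw m e lam kap mu DA epsA"
abbreviation Delta :: "('a,'k) tw \<Rightarrow> ('a,'k) tw" where "Delta \<equiv> De m e lam kap mu DA epsA"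

lemma kap_eq: "kap = lam * mu - mu * mu"
  using root by (simp add: power2_eq_square algebra_simps eq_neg_iff_add_eq_0)

lemma homog_DA: "homog 2 (DA a)"
  unfolding homog_def using DA_shape[of a] by fastforce

lemma nonempty_factors_DA: "nonempty_factors (DA x)"
  by (rule homog_nonempty_factors[OF homog_DA])

lemma DA_mult_mlin_eq: "DA (m x y) \<approx> DA x \<diamond> DA y"
  by (rule teq_mlin_eq[OF DA_mult nonempty_factors_DA nonempty_factors_dprod])

lemma DA_unit_mlin_eq: "DA e \<approx> wd [[e], [e]]"
  by (rule teq_mlin_eq[OF DA_unit nonempty_factors_DA]) simp

lemma letter_linear_DA: "letter_linear DA"
  unfolding letter_linear_def using DA_add DA_scale
  by (blast intro: teq_mlin_eq nonempty_factors_DA nonempty_factors_add nonempty_factors_tsmult)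

lemma eps_w_Cons: "l \<noteq> [] \<Longrightarrow> eps_w (a # l) = epsA a * (- mu) * eps_w l"
  by (cases l) simp_all

lemma eps_w_add: "eps_w (xs @ (x + y) # ys) = eps_w (xs @ x # ys) + eps_w (xs @ y # ys)"
proof (induction xs)
  case Nil then show ?case by (cases ys) (simp_all add: epsA_add algebra_simps)
next
  case (Cons a xs) then show ?case by (simp add: eps_w_Cons algebra_simps)
qed

lemma eps_w_scale: "eps_w (xs @ s c x # ys) = c * eps_w (xs @ x # ys)"
proof (induction xs)
  case Nil then show ?case by (cases ys) (simp_all add: epsA_scale algebra_simps)
next
  case (Cons a xs) then show ?case by (simp add: eps_w_Cons algebra_simps)
qed

lemma eps_wd [simp]: "eps (wd [v]) = eps_w v"
  by (simp add: epse_def)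

lemma eps_add: "eps (x + y) = eps x + eps y"
  by (simp add: epse_def linf_add)

lemma eps_tsmult: "eps (tsmult c x) = c * eps x"
  by (simp add: epse_def linf_tsmult)

lemma eps_zero [simp]: "eps 0 = 0"
  by (simp add: epse_def)

lemma eps_lin: "eps (lin f x) = linf (\<lambda>w. eps (f w)) x"
  by (simp add: epse_def linf_lin)

lemma eps_expand: "eps x = linf (\<lambda>w. eps (wd w)) x"
  unfolding epse_def by (rule linf_cong) simp

lemma eps_tensor_rels: "g \<in> kspan (tensor_rels s) \<Longrightarrow> eps g = 0"
  unfolding epse_def
proof (rule linf_kspan)
  fix r assume "r \<in> tensor_rels s"
  then consider us xs x y ys vs where "r = wd (us @ (xs @ (x + y) # ys) # vs)
      - wd (us @ (xs @ x # ys) # vs) - wd (us @ (xs @ y # ys) # vs)"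
    | us xs c x ys vs where "r = wd (us @ (xs @ s c x # ys) # vs) - tsmult c (wd (us @ (xs @ x # ys) # vs))"
    | w where "r = wd w" "[] \<in> set w"
    unfolding tensor_rels_def by blast
  then show "linf (\<lambda>w. case w of [v] \<Rightarrow> eps_w v | _ \<Rightarrow> 0) r = 0"
  proof cases
    case 1
    then show ?thesis by (cases us; cases vs) (simp_all add: linf_diff eps_w_add split: list.split)
  next
    case 2
    then show ?thesis by (cases us; cases vs) (simp_all add: linf_diff linf_tsmult eps_w_scale split: list.split)
  next
    case 3
    then show ?thesis by (cases w rule: remdups_adj.cases) auto
  qed
qed

lemma teq_eps: "teq s x y \<Longrightarrow> eps x = eps y"
  unfolding teq_def using eps_tensor_rels[of "x - y"] by (simp add: epse_def linf_diff)

lemma eps_pre: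
  assumes "homog 1 X"
  shows "eps (pre c X) = epsA c * (- mu) * eps X"
proof -
  have "eps (pre c X) = linf (\<lambda>w. epsA c * (- mu) * eps (wd w)) X"
  proof (subst pre_expand, unfold eps_lin, rule linf_cong)
    fix w assume "w \<in> Poly_Mapping.keys X"
    then obtain v where "w = [v]" "v \<noteq> []" using homog1_keys[OF assms] by blast
    then show "eps (pre c (wd w)) = epsA c * (- mu) * eps (wd w)" by (simp add: eps_w_Cons)
  qed
  also have "\<dots> = epsA c * (- mu) * eps X" by (simp only: linf_fun_mult eps_expand[of X, symmetric])
  finally show ?thesis .
qed

lemma eps_mfirst:
  assumes "homog 1 X"
  shows "eps (mf c X) = epsA c * eps X"
proof -
  have "eps (mf c X) = linf (\<lambda>w. epsA c * eps (wd w)) X"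
  proof (subst mfirst_expand, unfold eps_lin, rule linf_cong)
    fix w assume "w \<in> Poly_Mapping.keys X"
    then obtain b v where "w = [b # v]" using homog1_keys[OF assms] by (metis neq_Nil_conv)
    then show "eps (mf c (wd w)) = epsA c * eps (wd w)" by (cases v) (simp_all add: epsA_mult)
  qed
  also have "\<dots> = epsA c * eps X" by (simp only: linf_fun_mult eps_expand[of X, symmetric])
  finally show ?thesis .
qed

lemma eps_Q: "v \<noteq> [] \<Longrightarrow> w \<noteq> [] \<Longrightarrow> eps (Q v w) = eps_w v * eps_w w"
proof (induction "length v + length w" arbitrary: v w rule: less_induct)
  case less
  obtain a v' b w' where v: "v = a # v'" and w: "w = b # w'"
    using less.prems by (meson neq_Nil_conv)
  show ?case
  proof (cases "v' = [] \<or> w' = []")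
    case True
    then show ?thesis using v w by (cases w'; cases v') (auto simp: epsA_mult eps_w_Cons)
  next
    case False
    have IH: "eps (Q v' (e # w')) = eps_w v' * eps_w (e # w')" "eps (Q (e # v') w') = eps_w (e # v') * eps_w w'"
      "eps (Q v' w') = eps_w v' * eps_w w'"
      using less.hyps[of v' "e # w'"] less.hyps[of "e # v'" w'] less.hyps[of v' w'] v w False by simp_all
    have "eps (Q v w) = epsA a * epsA b * (- mu) * (eps (Q v' (e # w')) + eps (Q (e # v') w') + lam * eps (Q v' w'))
        + kap * (epsA a * epsA b * eps (Q v' w'))"
      using v w False by (simp add: eps_add eps_tsmult eps_pre eps_mfirst homog_Q epsA_mult algebra_simps)
    also have "\<dots> = eps_w v * eps_w w"
      unfolding IH using v w False by (simp add: eps_w_Cons epsA_unit kap_eq algebra_simps)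
    finally show ?thesis .
  qed
qed

lemma eps_dprod_homog:
  assumes "homog 1 x" "homog 1 y"
  shows "eps (x \<diamond> y) = eps x * eps y"
proof -
  have "eps (x \<diamond> y) = linf (\<lambda>v. linf (\<lambda>w. eps (wd v) * eps (wd w)) y) x"
  proof (simp only: dprod_homog1_expand[OF assms] eps_lin, rule linf_cong, rule linf_cong)
    fix v w assume "v \<in> Poly_Mapping.keys x" "w \<in> Poly_Mapping.keys y"
    then show "eps (Q (hd v) (hd w)) = eps (wd v) * eps (wd w)"
      using homog1_keys[OF assms(1)] homog1_keys[OF assms(2)] by (force simp: eps_Q)
  qed
  then show ?thesis
    by (simp add: linf_fun_mult eps_expand[of y, symmetric] mult.commute[of _ "eps y"])
      (simp add: linf_fun_mult eps_expand[of x, symmetric])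
qed

definition PB_word :: "'a list list \<Rightarrow> ('a,'k) tw" where
  "PB_word w = (case w of
       [v, u] \<Rightarrow> tsmult (eps_w u) (wd [e # v, [e]]) + tsmult (mu * eps_w u) (wd [v, [e]]) + wd [v, e # u]
     | _ \<Rightarrow> 0)"

lemma PB_eq_lin: "PB x = lin PB_word x"
  unfolding Pbar_def PB_word_def[abs_def] by (rule refl)

lemma PB_word_simp [simp]:
  "PB_word [v, u] = tsmult (eps_w u) (wd [e # v, [e]]) + tsmult (mu * eps_w u) (wd [v, [e]]) + wd [v, e # u]"
  by (simp add: PB_word_def)

lemma PB_word_length: "length w \<noteq> 2 \<Longrightarrow> PB_word w = 0"
  by (auto simp: PB_word_def split: list.split)

lemma PB_linear: "PB (x + y) = PB x + PB y" "PB (tsmult c x) = tsmult c (PB x)"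
  by (simp_all add: PB_eq_lin lin_add lin_tsmult)

lemma letter_linear_eps_w: "letter_linear (\<lambda>x. tsmult (c * eps_w (xs @ x # ys)) T)"
  by (rule letter_linear_scalar) (simp_all add: eps_w_add eps_w_scale algebra_simps)

lemma multilinear_PB_word: "multilinear PB_word"
  unfolding multilinear_def
proof (intro allI)
  fix us vs :: "'a list list" and xs ys :: "'a list"
  consider u where "us = []" "vs = [u]" | v where "us = [v]" "vs = []" | "length (us @ [] # vs) \<noteq> 2"
    by (cases us rule: remdups_adj.cases; cases vs rule: remdups_adj.cases) auto
  then show "letter_linear (\<lambda>x. PB_word (us @ (xs @ x # ys) # vs))"
  proof cases
    case 1
    then show ?thesis
      using letter_linear_wd[of "[]" "e # xs" ys "[[e]]"] letter_linear_wd[of "[]" xs ys "[[e]]"]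
        letter_linear_wd[of "[]" xs ys "[e # u]"]
      by (simp add: letter_linear_add letter_linear_tsmult)
  next
    case 2
    then show ?thesis
      using letter_linear_eps_w[of 1 xs ys] letter_linear_eps_w[of mu xs ys]
        letter_linear_wd[of "[v]" "e # xs" ys "[]"]
      by (simp add: letter_linear_add)
  next
    case 3
    then show ?thesis by (simp add: PB_word_length letter_linear_zero)
  qed
qed

lemma mlin_eq_PB: "x \<approx> y \<Longrightarrow> PB x \<approx> PB y"
  unfolding PB_eq_lin by (rule lin_mlin_eq[OF multilinear_PB_word])

lemma homog_PB: "homog 2 X \<Longrightarrow> homog 2 (PB X)"
  unfolding PB_eq_lin by (rule homog_lin) (use homog2_keys in \<open>fastforce simp: homog_add homog_tsmult\<close>)

lemma PB_tprod:
  assumes "homog 1 A" "homog 1 B"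
  shows "PB (tprod A B) = tsmult (eps B) (tprod (P A) one) + tsmult (mu * eps B) (tprod A one) + tprod A (P B)"
proof (rule bilinear_ext_eq[where F = "\<lambda>A B. PB (tprod A B)" and
      G = "\<lambda>A B. tsmult (eps B) (tprod (P A) one) + tsmult (mu * eps B) (tprod A one) + tprod A (P B)"])
  fix a b assume "a \<in> Poly_Mapping.keys A" "b \<in> Poly_Mapping.keys B"
  then obtain p q where "a = [p]" "b = [q]" "p \<noteq> []" "q \<noteq> []"
    using homog1_keys[OF assms(1)] homog1_keys[OF assms(2)] by blast
  then show "PB (tprod (wd a) (wd b)) = tsmult (eps (wd b)) (tprod (P (wd a)) one)
      + tsmult (mu * eps (wd b)) (tprod (wd a) one) + tprod (wd a) (P (wd b))"
    by (simp add: PB_eq_lin)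
qed (simp_all add: PB_linear tprod_linear pre_add pre_tsmult eps_add eps_tsmult
    tsmult_add_left tsmult_add_right algebra_simps)

text \<open>On pure tensors, \<open>Pbar\<close> is assembled from \<open>P\<close>; the identity \<open>kap = lam mu - mu\<^sup>2\<close>
  coming from the root \<open>mu\<close> makes the \<open>mu\<close>-terms cancel.\<close>

lemma PB_rota_baxter_tprod:
  assumes "homog 1 A" "homog 1 B" "homog 1 C" "homog 1 D"
  shows "PB (tprod A B) \<diamond> PB (tprod C D) = PB (tprod A B \<diamond> PB (tprod C D)) + PB (PB (tprod A B) \<diamond> tprod C D)
    + tsmult lam (PB (tprod A B \<diamond> tprod C D)) + tsmult kap (tprod A B \<diamond> tprod C D)"
proof -
  have "homog 1 one" by simp
  note homogs = assms this homog_pre homog_dprod1 homog_add homog_tsmult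
  show ?thesis
    apply (simp add: homogs PB_tprod dprod_tprod[of 1] P_rota_baxter dprod_one_left dprod_one_right
        eps_pre eps_dprod_homog dprod_linear tprod_linear PB_linear pre_add pre_tsmult eps_add eps_tsmult
        tsmult_add_right m_unit epsA_unit)
    apply (rule poly_mapping_eqI)
    apply (simp add: lookup_add algebra_simps kap_eq)
    done
qed

lemma PB_rota_baxter:
  assumes "homog 2 X" "homog 2 Y"
  shows "PB X \<diamond> PB Y = PB (X \<diamond> PB Y) + PB (PB X \<diamond> Y) + tsmult lam (PB (X \<diamond> Y)) + tsmult kap (X \<diamond> Y)"
proof (rule bilinear_ext_eq[where F = "\<lambda>X Y. PB X \<diamond> PB Y" and
      G = "\<lambda>X Y. PB (X \<diamond> PB Y) + PB (PB X \<diamond> Y) + tsmult lam (PB (X \<diamond> Y)) + tsmult kap (X \<diamond> Y)"])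
  fix v w assume v: "v \<in> Poly_Mapping.keys X" and w: "w \<in> Poly_Mapping.keys Y"
  obtain p q where 1: "v = [p, q]" "p \<noteq> []" "q \<noteq> []" using homog2_keys[OF assms(1) v] by blast
  obtain p' q' where 2: "w = [p', q']" "p' \<noteq> []" "q' \<noteq> []" using homog2_keys[OF assms(2) w] by blast
  have t: "wd [a, b] = tprod (wd [a]) (wd [b])" for a b :: "'a list" by simp
  show "PB (wd v) \<diamond> PB (wd w) = PB (wd v \<diamond> PB (wd w)) + PB (PB (wd v) \<diamond> wd w) +
      tsmult lam (PB (wd v \<diamond> wd w)) + tsmult kap (wd v \<diamond> wd w)"
    unfolding 1 2 t by (rule PB_rota_baxter_tprod) (use 1 2 in simp_all)
qed (simp_all add: dprod_linear PB_linear tsmult_add_right ac_simps)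

definition Delta_word :: "'a list list \<Rightarrow> ('a,'k) tw" where
  "Delta_word w = (case w of [v] \<Rightarrow> Delta_w v | _ \<Rightarrow> 0)"

lemma Delta_eq_lin: "Delta x = lin Delta_word x"
  unfolding De_def Delta_word_def[abs_def] by (rule refl)

lemma Delta_wd [simp]: "Delta (wd [v]) = Delta_w v"
  by (simp add: Delta_eq_lin Delta_word_def)

lemma Delta_linear: "Delta (x + y) = Delta x + Delta y" "Delta (tsmult c x) = tsmult c (Delta x)"
  by (simp_all add: Delta_eq_lin lin_add lin_tsmult)

lemma Delta_w_Cons: "l \<noteq> [] \<Longrightarrow> Delta_w (a # l) = DA a \<diamond> PB (Delta_w l)"
  by (cases l) simp_all

lemma homog_Delta_w: "homog 2 (Delta_w v)"
proof (induction v)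
  case (Cons a l)
  then show ?case by (cases "l = []") (simp_all add: homog_DA Delta_w_Cons homog_dprod2 homog_PB)
qed simp

lemma homog_Delta: "homog 2 (Delta x)"
  unfolding Delta_eq_lin by (rule homog_lin) (simp add: Delta_word_def homog_Delta_w split: list.split)

lemma letter_linear_Delta_w: "letter_linear (\<lambda>x. Delta_w (xs @ x # ys))"
proof (induction xs)
  case Nil
  show ?case
  proof (cases "ys = []")
    case False
    have "letter_linear (\<lambda>x. DA x \<diamond> PB (Delta_w ys))"
      by (rule letter_linear_map[OF letter_linear_DA]) (simp_all add: dprod_linear mlin_eq_dprod)
    then show ?thesis using False by (simp add: Delta_w_Cons)
  qed (simp add: letter_linear_DA)
next
  case (Cons a xs)
  have "letter_linear (\<lambda>x. DA a \<diamond> PB (Delta_w (xs @ x # ys)))"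
    by (rule letter_linear_map[OF Cons]) (simp_all add: dprod_linear PB_linear mlin_eq_dprod mlin_eq_PB)
  then show ?case by (simp add: Delta_w_Cons)
qed

lemma multilinear_Delta_word: "multilinear Delta_word"
  by (rule multilinear_single_factor) (auto simp: Delta_word_def letter_linear_Delta_w split: list.split)

lemma teq_Delta: "teq s x y \<Longrightarrow> Delta x \<approx> Delta y"
  unfolding Delta_eq_lin
  by (rule lin_teq_mlin_eq[OF multilinear_Delta_word])
    (auto simp: Delta_word_def split: list.split)

lemma Delta_pre:
  assumes "homog 1 X"
  shows "Delta (pre c X) = DA c \<diamond> PB (Delta X)"
proof (rule linear_ext_eq[where F = "\<lambda>X. Delta (pre c X)" and G = "\<lambda>X. DA c \<diamond> PB (Delta X)"])
  fix w assume "w \<in> Poly_Mapping.keys X"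
  then obtain u where "w = [u]" "u \<noteq> []" using homog1_keys[OF assms] by blast
  then show "Delta (pre c (wd w)) = DA c \<diamond> PB (Delta (wd w))" by (simp add: Delta_w_Cons)
qed (simp_all add: Delta_linear pre_add pre_tsmult PB_linear dprod_linear)

lemma Delta_mfirst:
  assumes "homog 1 X"
  shows "Delta (mf c X) \<approx> DA c \<diamond> Delta X"
proof (rule linear_ext_mlin_eq[where F = "\<lambda>X. Delta (mf c X)" and G = "\<lambda>X. DA c \<diamond> Delta X"])
  fix w assume "w \<in> Poly_Mapping.keys X"
  then obtain b u where w: "w = [b # u]" using homog1_keys[OF assms] by (metis neq_Nil_conv)
  show "Delta (mf c (wd w)) \<approx> DA c \<diamond> Delta (wd w)"
  proof (cases "u = []")
    case False
    have "DA (m c b) \<diamond> PB (Delta_w u) \<approx> (DA c \<diamond> DA b) \<diamond> PB (Delta_w u)"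
      by (rule mlin_eq_dprod[OF DA_mult_mlin_eq mlin_eq_refl])
    also have "\<dots> = DA c \<diamond> (DA b \<diamond> PB (Delta_w u))"
      by (rule dprod_assoc2[OF homog_DA homog_DA homog_PB[OF homog_Delta_w]])
    finally show ?thesis using w False by (simp add: Delta_w_Cons)
  qed (use w DA_mult_mlin_eq in simp)
qed (simp_all add: Delta_linear mfirst_add mfirst_tsmult dprod_linear)

lemma Delta_w_unit_Cons: "u \<noteq> [] \<Longrightarrow> Delta_w (e # u) \<approx> PB (Delta_w u)"
  using mlin_eq_dprod[OF DA_unit_mlin_eq mlin_eq_refl, of "PB (Delta_w u)"]
  by (simp add: Delta_w_Cons dprod_one2_left homog_PB homog_Delta_w)

text \<open>The inductive step for the multiplicativity of \<open>Delta\<close> on words: the Rota-Baxter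
  identity of \<open>Pbar\<close> matches the recursion of the quasi-shuffle product.\<close>

lemma Delta_Q_Cons_Cons:
  assumes "v \<noteq> []" "w \<noteq> []" and X: "homog 2 X" and Y: "homog 2 Y"
    and IH: "Delta (Q v (e # w)) \<approx> X \<diamond> PB Y" "Delta (Q (e # v) w) \<approx> PB X \<diamond> Y" "Delta (Q v w) \<approx> X \<diamond> Y"
  shows "Delta (Q (a # v) (b # w)) \<approx> (DA a \<diamond> PB X) \<diamond> (DA b \<diamond> PB Y)"
proof -
  have mf: "Delta (mf (m a b) (Q v w)) \<approx> DA (m a b) \<diamond> (X \<diamond> Y)"
    using mlin_eq_trans[OF Delta_mfirst[OF homog_Q] mlin_eq_dprod[OF mlin_eq_refl IH(3)]] .
  moreover have "Delta (Q (a # v) (b # w)) = DA (m a b) \<diamond> PB (Delta (Q v (e # w)))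
      + DA (m a b) \<diamond> PB (Delta (Q (e # v) w)) + tsmult lam (DA (m a b) \<diamond> PB (Delta (Q v w)))
      + tsmult kap (Delta (mf (m a b) (Q v w)))"
    using assms(1,2) by (simp add: Delta_linear Delta_pre homog_Q dprod_linear)
  ultimately have "Delta (Q (a # v) (b # w)) \<approx> DA (m a b) \<diamond> PB (X \<diamond> PB Y) + DA (m a b) \<diamond> PB (PB X \<diamond> Y)
      + tsmult lam (DA (m a b) \<diamond> PB (X \<diamond> Y)) + tsmult kap (DA (m a b) \<diamond> (X \<diamond> Y))"
    by (simp only:) (intro mlin_eq_add mlin_eq_tsmult mlin_eq_dprod[OF mlin_eq_refl] mlin_eq_PB IH mf)
  also have "\<dots> = DA (m a b) \<diamond> (PB X \<diamond> PB Y)"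
    by (simp add: PB_rota_baxter[OF X Y] dprod_linear)
  also have "\<dots> \<approx> (DA a \<diamond> DA b) \<diamond> (PB X \<diamond> PB Y)"
    by (rule mlin_eq_dprod[OF DA_mult_mlin_eq mlin_eq_refl])
  also have "\<dots> = (DA a \<diamond> PB X) \<diamond> (DA b \<diamond> PB Y)"
    by (rule dprod_swap2[OF homog_DA homog_DA homog_PB[OF X] homog_PB[OF Y]])
  finally show ?thesis .
qed

lemma Delta_Q: "v \<noteq> [] \<Longrightarrow> w \<noteq> [] \<Longrightarrow> Delta (Q v w) \<approx> Delta_w v \<diamond> Delta_w w"
proof (induction "length v + length w" arbitrary: v w rule: less_induct)
  case less
  have single: "Delta (Q [a] z) \<approx> Delta_w [a] \<diamond> Delta_w z" if "z \<noteq> []" for a z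
    using Delta_mfirst[of "wd [z]" a] dprod_letter_left[of "wd [z]" a] that by simp
  obtain a v' b w' where v: "v = a # v'" and w: "w = b # w'"
    using less.prems by (meson neq_Nil_conv)
  show ?case
  proof (cases "v' = [] \<or> w' = []")
    case True
    show ?thesis
    proof (cases "v' = []")
      case True
      then show ?thesis using single[OF less.prems(2), of a] v by simp
    next
      case False
      then have w1: "w = [b]" using \<open>v' = [] \<or> w' = []\<close> w by simp
      then have "Q v w = Q [b] v" by (simp only: Q_comm)
      then have "Delta (Q v w) \<approx> Delta_w [b] \<diamond> Delta_w v"
        using single[OF less.prems(1), of b] by (simp only:)
      then show ?thesis unfolding w1 dprod_comm[of "Delta_w v"] .
    qed
  next
    case False
    have "Delta (Q v' (e # w')) \<approx> Delta_w v' \<diamond> PB (Delta_w w')"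
      using mlin_eq_trans[OF less.hyps[of v' "e # w'"] mlin_eq_dprod[OF mlin_eq_refl Delta_w_unit_Cons]]
        v w False by simp
    moreover have "Delta (Q (e # v') w') \<approx> PB (Delta_w v') \<diamond> Delta_w w'"
      using mlin_eq_trans[OF less.hyps[of "e # v'" w'] mlin_eq_dprod[OF Delta_w_unit_Cons mlin_eq_refl]]
        v w False by simp
    moreover have "Delta (Q v' w') \<approx> Delta_w v' \<diamond> Delta_w w'"
      using less.hyps[of v' w'] v w False by simp
    ultimately show ?thesis
      using Delta_Q_Cons_Cons[of v' w' "Delta_w v'" "Delta_w w'" a b] v w False
      by (simp add: homog_Delta_w Delta_w_Cons)
  qed
qed

end

context ext_rb_bialgebra
begin

section \<open>The counit axioms\<close>

abbreviation eps_id :: "('a,'k) tw \<Rightarrow> ('a,'k) tw" where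
  "eps_id \<equiv> tmap2 (\<lambda>v. tsmult (eps_w v) (wd [])) (\<lambda>v. wd [v])"

abbreviation id_eps :: "('a,'k) tw \<Rightarrow> ('a,'k) tw" where
  "id_eps \<equiv> tmap2 (\<lambda>v. wd [v]) (\<lambda>v. tsmult (eps_w v) (wd []))"

lemma lin_wd_hd: "homog 1 B \<Longrightarrow> lin (\<lambda>w. wd [hd w]) B = B"
  by (subst (2) lin_wd_id[symmetric], rule lin_cong) (use homog1_keys in force)

lemma linf_eps_w_hd: "homog 1 A \<Longrightarrow> linf (\<lambda>w. eps_w (hd w)) A = eps A"
  unfolding epse_def by (rule linf_cong) (use homog1_keys in force)

lemma lin_Delta_w_hd: "homog 1 A \<Longrightarrow> lin (\<lambda>w. Delta_w (hd w)) A = Delta A"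
  unfolding Delta_eq_lin by (rule lin_cong) (use homog1_keys in \<open>force simp: Delta_word_def\<close>)

lemma eps_id_tprod:
  assumes "homog 1 A" "homog 1 B"
  shows "eps_id (tprod A B) = tsmult (eps A) B"
  by (simp only: tmap2_tprod[OF assms] lin_const linf_eps_w_hd[OF assms(1)] lin_wd_hd[OF assms(2)]
      tprod_tsmult_left tprod_nil_left)

lemma id_eps_tprod:
  assumes "homog 1 A" "homog 1 B"
  shows "id_eps (tprod A B) = tsmult (eps B) A"
  by (simp only: tmap2_tprod[OF assms] lin_const linf_eps_w_hd[OF assms(2)] lin_wd_hd[OF assms(1)]
      tprod_tsmult_right tprod_nil_right)

lemma eps_id_dprod:
  assumes "homog 2 X" "homog 2 Y"
  shows "eps_id (X \<diamond> Y) = eps_id X \<diamond> eps_id Y"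
proof (rule bilinear_ext_eq[where F = "\<lambda>X Y. eps_id (X \<diamond> Y)" and G = "\<lambda>X Y. eps_id X \<diamond> eps_id Y"])
  fix v w assume v: "v \<in> Poly_Mapping.keys X" and w: "w \<in> Poly_Mapping.keys Y"
  obtain p1 q1 where 1: "v = [p1, q1]" "p1 \<noteq> []" "q1 \<noteq> []" using homog2_keys[OF assms(1) v] by blast
  obtain p2 q2 where 2: "w = [p2, q2]" "p2 \<noteq> []" "q2 \<noteq> []" using homog2_keys[OF assms(2) w] by blast
  show "eps_id (wd v \<diamond> wd w) = eps_id (wd v) \<diamond> eps_id (wd w)"
    using 1 2 by (simp add: eps_id_tprod homog_Q eps_Q dprod_tsmult_left dprod_tsmult_right
        tprod_tsmult_left mult.commute)
qed (simp_all add: tmap2_add tmap2_tsmult dprod_linear)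

lemma id_eps_dprod:
  assumes "homog 2 X" "homog 2 Y"
  shows "id_eps (X \<diamond> Y) = id_eps X \<diamond> id_eps Y"
proof (rule bilinear_ext_eq[where F = "\<lambda>X Y. id_eps (X \<diamond> Y)" and G = "\<lambda>X Y. id_eps X \<diamond> id_eps Y"])
  fix v w assume v: "v \<in> Poly_Mapping.keys X" and w: "w \<in> Poly_Mapping.keys Y"
  obtain p1 q1 where 1: "v = [p1, q1]" "p1 \<noteq> []" "q1 \<noteq> []" using homog2_keys[OF assms(1) v] by blast
  obtain p2 q2 where 2: "w = [p2, q2]" "p2 \<noteq> []" "q2 \<noteq> []" using homog2_keys[OF assms(2) w] by blast
  show "id_eps (wd v \<diamond> wd w) = id_eps (wd v) \<diamond> id_eps (wd w)"
    using 1 2 by (simp add: id_eps_tprod homog_Q eps_Q dprod_tsmult_left dprod_tsmult_right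
        tprod_tsmult_right mult.commute)
qed (simp_all add: tmap2_add tmap2_tsmult dprod_linear)

lemma eps_id_PB:
  assumes "homog 2 Z"
  shows "eps_id (PB Z) = P (eps_id Z)"
proof (rule linear_ext_eq[where F = "\<lambda>Z. eps_id (PB Z)" and G = "\<lambda>Z. P (eps_id Z)"])
  fix w assume w: "w \<in> Poly_Mapping.keys Z"
  obtain v u where 1: "w = [v, u]" "v \<noteq> []" "u \<noteq> []" using homog2_keys[OF assms w] by blast
  have "eps_id (PB (wd w)) = tsmult (eps_w u * (epsA e * (- mu) * eps_w v)) (wd [[e]])
      + tsmult (mu * eps_w u * eps_w v) (wd [[e]]) + tsmult (eps_w v) (wd [e # u])"
    using 1 by (simp add: PB_eq_lin tmap2_add tmap2_tsmult eps_w_Cons mult.assoc tprod_tsmult_left)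
  also have "\<dots> = P (eps_id (wd w))"
    using 1 by (simp add: epsA_unit pre_tsmult tprod_tsmult_left tsmult_add_left[symmetric] algebra_simps)
  finally show "eps_id (PB (wd w)) = P (eps_id (wd w))" .
qed (simp_all add: tmap2_add tmap2_tsmult PB_linear pre_add pre_tsmult)

lemma id_eps_PB:
  assumes "homog 2 Z"
  shows "id_eps (PB Z) = P (id_eps Z)"
proof (rule linear_ext_eq[where F = "\<lambda>Z. id_eps (PB Z)" and G = "\<lambda>Z. P (id_eps Z)"])
  fix w assume w: "w \<in> Poly_Mapping.keys Z"
  obtain v u where 1: "w = [v, u]" "v \<noteq> []" "u \<noteq> []" using homog2_keys[OF assms w] by blast
  have "id_eps (PB (wd w)) = tsmult (eps_w u * epsA e) (wd [e # v]) + tsmult (mu * eps_w u * epsA e) (wd [v])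
      + tsmult (epsA e * (- mu) * eps_w u) (wd [v])"
    using 1 by (simp add: PB_eq_lin tmap2_add tmap2_tsmult eps_w_Cons mult.assoc tprod_tsmult_right)
  also have "\<dots> = P (id_eps (wd w))"
    using 1 by (simp add: epsA_unit pre_tsmult tprod_tsmult_right add.assoc tsmult_add_left[symmetric]
        algebra_simps)
  finally show "id_eps (PB (wd w)) = P (id_eps (wd w))" .
qed (simp_all add: tmap2_add tmap2_tsmult PB_linear pre_add pre_tsmult)

lemma tmap2_DA_cong:
  assumes "\<And>p. f [p] = f' [p]" "\<And>q. g [q] = g' [q]"
  shows "tmap2 f g (DA a) = tmap2 f' g' (DA a)"
  unfolding tmap2_def by (rule lin_cong) (use DA_shape assms in force)

lemma nonempty_factors_tmap2_DA:
  assumes "\<And>p. nonempty_factors (f [p])" "\<And>q. nonempty_factors (g [q])"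
  shows "nonempty_factors (tmap2 f g (DA a))"
  unfolding tmap2_def
proof (rule nonempty_factors_lin)
  fix w assume "w \<in> Poly_Mapping.keys (DA a)"
  then obtain p q where "w = [[p], [q]]" using DA_shape[of a] by blast
  then show "nonempty_factors (case w of [v, u] \<Rightarrow> tprod (f v) (g u) | _ \<Rightarrow> 0)"
    by (simp add: nonempty_factors_tprod assms)
qed

lemma eps_id_DA: "eps_id (DA a) \<approx> wd [[a]]"
proof (rule teq_mlin_eq)
  have "eps_id (DA a) = tmap2 (\<lambda>v. case v of [a] \<Rightarrow> tsmult (epsA a) (wd []) | _ \<Rightarrow> 0) (\<lambda>v. wd [v]) (DA a)"
    by (rule tmap2_DA_cong) simp_all
  then show "teq s (eps_id (DA a)) (wd [[a]])" using counit_A_left[of a] by simp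
qed (auto intro!: nonempty_factors_tmap2_DA nonempty_factors_tsmult)

lemma id_eps_DA: "id_eps (DA a) \<approx> wd [[a]]"
proof (rule teq_mlin_eq)
  have "id_eps (DA a) = tmap2 (\<lambda>v. wd [v]) (\<lambda>v. case v of [a] \<Rightarrow> tsmult (epsA a) (wd []) | _ \<Rightarrow> 0) (DA a)"
    by (rule tmap2_DA_cong) simp_all
  then show "teq s (id_eps (DA a)) (wd [[a]])" using counit_A_right[of a] by simp
qed (auto intro!: nonempty_factors_tmap2_DA nonempty_factors_tsmult)

lemma wd_letter_Cons: "l \<noteq> [] \<Longrightarrow> wd [[a]] \<diamond> P (wd [l]) = wd [a # l]"
  by (simp add: dprod_letter_left homog_pre mfirst_pre m_unit_right)

lemma counit_Delta_w: "v \<noteq> [] \<Longrightarrow> eps_id (Delta_w v) \<approx> wd [v] \<and> id_eps (Delta_w v) \<approx> wd [v]"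
proof (induction v)
  case (Cons a l)
  show ?case
  proof (cases "l = []")
    case False
    have hPB: "homog 2 (PB (Delta_w l))" by (rule homog_PB[OF homog_Delta_w])
    have "eps_id (Delta_w (a # l)) = eps_id (DA a) \<diamond> P (eps_id (Delta_w l))"
      using False by (simp add: Delta_w_Cons eps_id_dprod[OF homog_DA hPB] eps_id_PB[OF homog_Delta_w])
    also have "\<dots> \<approx> wd [[a]] \<diamond> P (wd [l])"
      using Cons False by (intro mlin_eq_dprod mlin_eq_pre eps_id_DA) blast
    also have "\<dots> = wd [a # l]" using False by (rule wd_letter_Cons)
    finally have "eps_id (Delta_w (a # l)) \<approx> wd [a # l]" .
    have "id_eps (Delta_w (a # l)) = id_eps (DA a) \<diamond> P (id_eps (Delta_w l))"
      using False by (simp add: Delta_w_Cons id_eps_dprod[OF homog_DA hPB] id_eps_PB[OF homog_Delta_w])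
    also have "\<dots> \<approx> wd [[a]] \<diamond> P (wd [l])"
      using Cons False by (intro mlin_eq_dprod mlin_eq_pre id_eps_DA) blast
    also have "\<dots> = wd [a # l]" using False by (rule wd_letter_Cons)
    finally show ?thesis using \<open>eps_id (Delta_w (a # l)) \<approx> wd [a # l]\<close> by blast
  qed (simp add: eps_id_DA id_eps_DA)
qed simp

lemma counit_Sh:
  assumes "x \<in> Sh"
  shows "teq s (eps_id (Delta x)) x \<and> teq s (id_eps (Delta x)) x"
proof -
  have key: "teq s (eps_id (Delta_word w)) (wd w) \<and> teq s (id_eps (Delta_word w)) (wd w)"
    if hw: "w \<in> Poly_Mapping.keys x" for w
  proof -
    obtain v where v: "w = [v]" using Sh_keys[OF assms hw] by blast
    show ?thesis
    proof (cases "v = []")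
      case True
      then show ?thesis using v teq_empty_factor[of w] by (simp add: Delta_word_def tmap2_def)
    next
      case False
      then show ?thesis using v counit_Delta_w[of v] mlin_eq_teq by (simp add: Delta_word_def)
    qed
  qed
  have "teq s (lin (\<lambda>w. eps_id (Delta_word w)) x) (lin wd x)"
    by (rule teq_lin_cong) (use key in blast)
  moreover have "teq s (lin (\<lambda>w. id_eps (Delta_word w)) x) (lin wd x)"
    by (rule teq_lin_cong) (use key in blast)
  ultimately show ?thesis by (simp add: Delta_eq_lin tmap2_lin)
qed

section \<open>Coassociativity\<close>

abbreviation Delta_id :: "('a,'k) tw \<Rightarrow> ('a,'k) tw" where "Delta_id \<equiv> tmap2 Delta_w (\<lambda>v. wd [v])"

abbreviation id_Delta :: "('a,'k) tw \<Rightarrow> ('a,'k) tw" where "id_Delta \<equiv> tmap2 (\<lambda>v. wd [v]) Delta_w"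

lemma Delta_id_tprod: "homog 1 A \<Longrightarrow> homog 1 B \<Longrightarrow> Delta_id (tprod A B) = tprod (Delta A) B"
  by (simp only: tmap2_tprod lin_Delta_w_hd lin_wd_hd)

lemma id_Delta_tprod: "homog 1 A \<Longrightarrow> homog 1 B \<Longrightarrow> id_Delta (tprod A B) = tprod A (Delta B)"
  by (simp only: tmap2_tprod lin_Delta_w_hd lin_wd_hd)

lemma Delta_id_dprod:
  assumes "homog 2 X" "homog 2 Y"
  shows "Delta_id (X \<diamond> Y) \<approx> Delta_id X \<diamond> Delta_id Y"
proof (rule bilinear_ext_mlin_eq[where F = "\<lambda>X Y. Delta_id (X \<diamond> Y)" and G = "\<lambda>X Y. Delta_id X \<diamond> Delta_id Y"])
  fix v w assume v: "v \<in> Poly_Mapping.keys X" and w: "w \<in> Poly_Mapping.keys Y"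
  obtain p1 q1 where 1: "v = [p1, q1]" "p1 \<noteq> []" "q1 \<noteq> []" using homog2_keys[OF assms(1) v] by blast
  obtain p2 q2 where 2: "w = [p2, q2]" "p2 \<noteq> []" "q2 \<noteq> []" using homog2_keys[OF assms(2) w] by blast
  have "Delta_id (wd v \<diamond> wd w) = tprod (Delta (Q p1 p2)) (Q q1 q2)"
    using 1 2 by (simp add: Delta_id_tprod homog_Q)
  also have "\<dots> \<approx> tprod (Delta_w p1 \<diamond> Delta_w p2) (Q q1 q2)"
    using 1 2 by (intro mlin_eq_tprod Delta_Q mlin_eq_refl)
  also have "\<dots> = Delta_id (wd v) \<diamond> Delta_id (wd w)"
    using 1 2 by (simp add: dprod_tprod[OF homog_Delta_w homog_Delta_w])
  finally show "Delta_id (wd v \<diamond> wd w) \<approx> Delta_id (wd v) \<diamond> Delta_id (wd w)" .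
qed (simp_all add: tmap2_add tmap2_tsmult dprod_linear)

lemma id_Delta_dprod:
  assumes "homog 2 X" "homog 2 Y"
  shows "id_Delta (X \<diamond> Y) \<approx> id_Delta X \<diamond> id_Delta Y"
proof (rule bilinear_ext_mlin_eq[where F = "\<lambda>X Y. id_Delta (X \<diamond> Y)" and G = "\<lambda>X Y. id_Delta X \<diamond> id_Delta Y"])
  fix v w assume v: "v \<in> Poly_Mapping.keys X" and w: "w \<in> Poly_Mapping.keys Y"
  obtain p1 q1 where 1: "v = [p1, q1]" "p1 \<noteq> []" "q1 \<noteq> []" using homog2_keys[OF assms(1) v] by blast
  obtain p2 q2 where 2: "w = [p2, q2]" "p2 \<noteq> []" "q2 \<noteq> []" using homog2_keys[OF assms(2) w] by blast
  have "id_Delta (wd v \<diamond> wd w) = tprod (Q p1 p2) (Delta (Q q1 q2))"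
    using 1 2 by (simp add: id_Delta_tprod homog_Q)
  also have "\<dots> \<approx> tprod (Q p1 p2) (Delta_w q1 \<diamond> Delta_w q2)"
    using 1 2 by (intro mlin_eq_tprod Delta_Q mlin_eq_refl)
  also have "\<dots> = id_Delta (wd v) \<diamond> id_Delta (wd w)"
    using 1 2 by (simp add: dprod_tprod[of 1])
  finally show "id_Delta (wd v \<diamond> wd w) \<approx> id_Delta (wd v) \<diamond> id_Delta (wd w)" .
qed (simp_all add: tmap2_add tmap2_tsmult dprod_linear)

text \<open>\<open>Pbar3\<close> is \<open>Pbar\<close> on \<open>Sh_e(A)\<^sup>\<otimes>\<^sup>3\<close>, the first two factors forming one factor of
  \<open>Sh_e(A) \<otimes> Sh_e(A)\<close>: both \<open>Delta \<otimes> id\<close> and \<open>id \<otimes> Delta\<close> intertwine \<open>Pbar\<close> with it.\<close>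

definition Pbar3_word :: "'a list list \<Rightarrow> ('a,'k) tw" where
  "Pbar3_word w = (case w of
       [a, b, c] \<Rightarrow> tprod (PB (wd [a, b])) (tsmult (eps_w c) one) + tsmult (mu * eps_w c) (wd [a, b, [e]])
         + wd [a, b, e # c]
     | _ \<Rightarrow> 0)"

definition Pbar3 :: "('a,'k) tw \<Rightarrow> ('a,'k) tw" where
  "Pbar3 x = lin Pbar3_word x"

lemma Pbar3_word_simp [simp]: "Pbar3_word [a, b, c] =
    tprod (PB (wd [a, b])) (tsmult (eps_w c) one) + tsmult (mu * eps_w c) (wd [a, b, [e]]) + wd [a, b, e # c]"
  by (simp add: Pbar3_word_def)

lemma Pbar3_word_length: "length w \<noteq> 3 \<Longrightarrow> Pbar3_word w = 0"
  by (auto simp: Pbar3_word_def split: list.split)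

lemma Pbar3_linear: "Pbar3 (x + y) = Pbar3 x + Pbar3 y" "Pbar3 (tsmult c x) = tsmult c (Pbar3 x)"
  by (simp_all add: Pbar3_def lin_add lin_tsmult)

lemma multilinear_Pbar3_word: "multilinear Pbar3_word"
  unfolding multilinear_def
proof (intro allI)
  fix us vs :: "'a list list" and xs ys :: "'a list"
  have PB_left: "letter_linear (\<lambda>x. tprod (PB (g x)) T)" if "letter_linear g" for g T
    by (rule letter_linear_map[OF that]) (simp_all add: PB_linear tprod_linear mlin_eq_tprod mlin_eq_PB)
  consider b c where "us = []" "vs = [b, c]" | a c where "us = [a]" "vs = [c]"
    | a b where "us = [a, b]" "vs = []" | "length (us @ [] # vs) \<noteq> 3"
    by (cases us rule: remdups_adj.cases; cases vs rule: remdups_adj.cases) auto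
  then show "letter_linear (\<lambda>x. Pbar3_word (us @ (xs @ x # ys) # vs))"
  proof cases
    case 1
    then show ?thesis
      using PB_left[OF letter_linear_wd[of "[]" xs ys "[b]"]] letter_linear_wd[of "[]" xs ys "[b, [e]]"]
        letter_linear_wd[of "[]" xs ys "[b, e # c]"]
      by (simp add: letter_linear_add letter_linear_tsmult)
  next
    case 2
    then show ?thesis
      using PB_left[OF letter_linear_wd[of "[a]" xs ys "[]"]] letter_linear_wd[of "[a]" xs ys "[[e]]"]
        letter_linear_wd[of "[a]" xs ys "[e # c]"]
      by (simp add: letter_linear_add letter_linear_tsmult)
  next
    case 3
    then show ?thesis
      using letter_linear_eps_w[of 1 xs ys "tprod (PB (wd [a, b])) one"]
        letter_linear_eps_w[of mu xs ys "wd [a, b, [e]]"] letter_linear_wd[of "[a, b]" "e # xs" ys "[]"]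
      by (simp add: letter_linear_add tprod_tsmult_right)
  next
    case 4
    then show ?thesis by (simp add: Pbar3_word_length letter_linear_zero)
  qed
qed

lemma mlin_eq_Pbar3: "x \<approx> y \<Longrightarrow> Pbar3 x \<approx> Pbar3 y"
  unfolding Pbar3_def by (rule lin_mlin_eq[OF multilinear_Pbar3_word])

lemma Pbar3_tprod_right:
  assumes "homog 2 C"
  shows "Pbar3 (tprod C (wd [u])) =
    tprod (PB C) (tsmult (eps_w u) one) + tsmult (mu * eps_w u) (tprod C one) + tprod C (wd [e # u])"
proof (rule linear_ext_eq[where F = "\<lambda>C. Pbar3 (tprod C (wd [u]))" and
    G = "\<lambda>C. tprod (PB C) (tsmult (eps_w u) one) + tsmult (mu * eps_w u) (tprod C one) + tprod C (wd [e # u])"])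
  fix w assume "w \<in> Poly_Mapping.keys C"
  then obtain a b where "w = [a, b]" using homog2_keys[OF assms] by blast
  then show "Pbar3 (tprod (wd w) (wd [u])) = tprod (PB (wd w)) (tsmult (eps_w u) one)
      + tsmult (mu * eps_w u) (tprod (wd w) one) + tprod (wd w) (wd [e # u])"
    by (simp add: Pbar3_def)
qed (simp_all add: Pbar3_linear PB_linear tprod_linear tsmult_add_right algebra_simps)

definition eps2 :: "('a,'k) tw \<Rightarrow> 'k" where
  "eps2 Y = linf (\<lambda>w. case w of [p, q] \<Rightarrow> eps_w p * eps_w q | _ \<Rightarrow> 0) Y"

lemma Pbar3_tprod_left:
  assumes "homog 2 Y"
  shows "Pbar3 (tprod (wd [v]) Y) =
    tsmult (eps2 Y) (wd [e # v, [e], [e]]) + tsmult (mu * eps2 Y) (wd [v, [e], [e]]) + tprod (wd [v]) (PB Y)"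
proof (rule linear_ext_eq[where F = "\<lambda>Y. Pbar3 (tprod (wd [v]) Y)" and
    G = "\<lambda>Y. tsmult (eps2 Y) (wd [e # v, [e], [e]]) + tsmult (mu * eps2 Y) (wd [v, [e], [e]]) + tprod (wd [v]) (PB Y)"])
  fix w assume "w \<in> Poly_Mapping.keys Y"
  then obtain p q where "w = [p, q]" using homog2_keys[OF assms] by blast
  then show "Pbar3 (tprod (wd [v]) (wd w)) = tsmult (eps2 (wd w)) (wd [e # v, [e], [e]])
      + tsmult (mu * eps2 (wd w)) (wd [v, [e], [e]]) + tprod (wd [v]) (PB (wd w))"
    by (simp add: Pbar3_def eps2_def PB_eq_lin tprod_linear tsmult_add_right algebra_simps)
qed (simp_all add: Pbar3_linear PB_linear eps2_def linf_add linf_tsmult tprod_linear tsmult_add_left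
    tsmult_add_right algebra_simps)

lemma eps_id_eps: "eps (id_eps Y) = eps2 Y"
  unfolding tmap2_def eps2_def eps_lin
  by (rule linf_cong) (auto simp: tprod_tsmult_right eps_tsmult mult.commute split: list.split)

lemma eps2_Delta_w:
  assumes "u \<noteq> []"
  shows "eps2 (Delta_w u) = eps_w u"
proof -
  have "eps (id_eps (Delta_w u)) = eps (wd [u])"
    by (rule teq_eps[OF mlin_eq_teq]) (use counit_Delta_w[OF assms] in blast)
  then show ?thesis by (simp add: eps_id_eps)
qed

lemma Delta_id_PB:
  assumes "homog 2 Z"
  shows "Delta_id (PB Z) \<approx> Pbar3 (Delta_id Z)"
proof (rule linear_ext_mlin_eq[where F = "\<lambda>Z. Delta_id (PB Z)" and G = "\<lambda>Z. Pbar3 (Delta_id Z)"])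
  fix w assume w: "w \<in> Poly_Mapping.keys Z"
  obtain v u where 1: "w = [v, u]" "v \<noteq> []" "u \<noteq> []" using homog2_keys[OF assms w] by blast
  have "Delta_id (PB (wd w)) = tsmult (eps_w u) (tprod (Delta_w (e # v)) one)
      + tsmult (mu * eps_w u) (tprod (Delta_w v) one) + tprod (Delta_w v) (wd [e # u])"
    using 1 by (simp add: PB_eq_lin tmap2_add tmap2_tsmult)
  also have "\<dots> \<approx> tsmult (eps_w u) (tprod (PB (Delta_w v)) one)
      + tsmult (mu * eps_w u) (tprod (Delta_w v) one) + tprod (Delta_w v) (wd [e # u])"
    using 1 by (intro mlin_eq_add mlin_eq_tsmult mlin_eq_tprod mlin_eq_refl Delta_w_unit_Cons)
  also have "\<dots> = Pbar3 (Delta_id (wd w))"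
    using 1 by (simp add: Pbar3_tprod_right homog_Delta_w tprod_tsmult_right)
  finally show "Delta_id (PB (wd w)) \<approx> Pbar3 (Delta_id (wd w))" .
qed (simp_all add: tmap2_add tmap2_tsmult PB_linear Pbar3_linear)

lemma id_Delta_PB:
  assumes "homog 2 Z"
  shows "id_Delta (PB Z) \<approx> Pbar3 (id_Delta Z)"
proof (rule linear_ext_mlin_eq[where F = "\<lambda>Z. id_Delta (PB Z)" and G = "\<lambda>Z. Pbar3 (id_Delta Z)"])
  fix w assume w: "w \<in> Poly_Mapping.keys Z"
  obtain v u where 1: "w = [v, u]" "v \<noteq> []" "u \<noteq> []" using homog2_keys[OF assms w] by blast
  have "id_Delta (PB (wd w)) = tsmult (eps_w u) (tprod (wd [e # v]) (DA e))
      + tsmult (mu * eps_w u) (tprod (wd [v]) (DA e)) + tprod (wd [v]) (Delta_w (e # u))"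
    using 1 by (simp add: PB_eq_lin tmap2_add tmap2_tsmult)
  also have "\<dots> \<approx> tsmult (eps_w u) (tprod (wd [e # v]) (wd [[e], [e]]))
      + tsmult (mu * eps_w u) (tprod (wd [v]) (wd [[e], [e]])) + tprod (wd [v]) (PB (Delta_w u))"
    using 1 by (intro mlin_eq_add mlin_eq_tsmult mlin_eq_tprod mlin_eq_refl Delta_w_unit_Cons DA_unit_mlin_eq)
  also have "\<dots> = Pbar3 (id_Delta (wd w))"
    using 1 by (simp add: Pbar3_tprod_left homog_Delta_w eps2_Delta_w)
  finally show "id_Delta (PB (wd w)) \<approx> Pbar3 (id_Delta (wd w))" .
qed (simp_all add: tmap2_add tmap2_tsmult PB_linear Pbar3_linear)

lemma coassoc_DA: "Delta_id (DA a) \<approx> id_Delta (DA a)"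
proof (rule teq_mlin_eq)
  have "Delta_id (DA a) = tmap2 (\<lambda>v. case v of [a] \<Rightarrow> DA a | _ \<Rightarrow> 0) (\<lambda>v. wd [v]) (DA a)"
    "id_Delta (DA a) = tmap2 (\<lambda>v. wd [v]) (\<lambda>v. case v of [a] \<Rightarrow> DA a | _ \<Rightarrow> 0) (DA a)"
    by (rule tmap2_DA_cong; simp)+
  then show "teq s (Delta_id (DA a)) (id_Delta (DA a))" using coassoc_A[of a] by simp
qed (auto intro!: nonempty_factors_tmap2_DA nonempty_factors_DA)

lemma coassoc_Delta_w: "v \<noteq> [] \<Longrightarrow> Delta_id (Delta_w v) \<approx> id_Delta (Delta_w v)"
proof (induction v)
  case (Cons a l)
  show ?case
  proof (cases "l = []")
    case False
    have hPB: "homog 2 (PB (Delta_w l))" by (rule homog_PB[OF homog_Delta_w])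
    have "Delta_id (Delta_w (a # l)) = Delta_id (DA a \<diamond> PB (Delta_w l))"
      using False by (simp add: Delta_w_Cons)
    also have "\<dots> \<approx> Delta_id (DA a) \<diamond> Delta_id (PB (Delta_w l))"
      by (rule Delta_id_dprod[OF homog_DA hPB])
    also have "\<dots> \<approx> Delta_id (DA a) \<diamond> Pbar3 (Delta_id (Delta_w l))"
      by (rule mlin_eq_dprod[OF mlin_eq_refl Delta_id_PB[OF homog_Delta_w]])
    also have "\<dots> \<approx> id_Delta (DA a) \<diamond> Pbar3 (id_Delta (Delta_w l))"
      using Cons False by (intro mlin_eq_dprod[OF coassoc_DA] mlin_eq_Pbar3) blast
    also have "\<dots> \<approx> id_Delta (DA a) \<diamond> id_Delta (PB (Delta_w l))"
      by (rule mlin_eq_dprod[OF mlin_eq_refl mlin_eq_sym[OF id_Delta_PB[OF homog_Delta_w]]])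
    also have "\<dots> \<approx> id_Delta (DA a \<diamond> PB (Delta_w l))"
      by (rule mlin_eq_sym[OF id_Delta_dprod[OF homog_DA hPB]])
    also have "\<dots> = id_Delta (Delta_w (a # l))"
      using False by (simp add: Delta_w_Cons)
    finally show ?thesis .
  qed (simp add: coassoc_DA)
qed simp

lemma coassoc_Sh:
  assumes "x \<in> Sh"
  shows "teq s (Delta_id (Delta x)) (id_Delta (Delta x))"
proof -
  have "teq s (lin (\<lambda>w. Delta_id (Delta_word w)) x) (lin (\<lambda>w. id_Delta (Delta_word w)) x)"
  proof (rule teq_lin_cong)
    fix w assume "w \<in> Poly_Mapping.keys x"
    then obtain v where v: "w = [v]" using Sh_keys[OF assms] by blast
    show "teq s (Delta_id (Delta_word w)) (id_Delta (Delta_word w))"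
    proof (cases "v = []")
      case False
      then show ?thesis using v coassoc_Delta_w[OF False] mlin_eq_teq by (simp add: Delta_word_def)
    qed (simp add: v Delta_word_def tmap2_def teq_refl)
  qed
  then show ?thesis by (simp add: Delta_eq_lin tmap2_lin)
qed

section \<open>Compatibility of the coalgebra with the product\<close>

lemma homog_Sh2: "homog 2 x \<Longrightarrow> x \<in> Sh2"
  unfolding Sh2_def using homog2_keys by blast

lemma Delta_Sh2: "Delta x \<in> Sh2"
  by (rule homog_Sh2[OF homog_Delta])

lemma eps_dprod_Sh:
  assumes "x \<in> Sh" "y \<in> Sh"
  shows "eps (x \<diamond> y) = eps x * eps y"
proof -
  have "eps (x \<diamond> y) = eps (drop_empty x \<diamond> drop_empty y)"
    by (simp only: dprod_drop_empty_left dprod_drop_empty_right)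
  also have "\<dots> = eps (drop_empty x) * eps (drop_empty y)"
    by (rule eps_dprod_homog) (simp_all add: homog_drop_empty assms)
  finally show ?thesis by (simp add: teq_eps[OF teq_drop_empty])
qed

lemma Delta_dprod_homog:
  assumes "homog 1 x" "homog 1 y"
  shows "Delta (x \<diamond> y) \<approx> Delta x \<diamond> Delta y"
proof (rule bilinear_ext_mlin_eq[where F = "\<lambda>x y. Delta (x \<diamond> y)" and G = "\<lambda>x y. Delta x \<diamond> Delta y"])
  fix v w assume v: "v \<in> Poly_Mapping.keys x" and w: "w \<in> Poly_Mapping.keys y"
  obtain p where "v = [p]" "p \<noteq> []" using homog1_keys[OF assms(1) v] by blast
  moreover obtain q where "w = [q]" "q \<noteq> []" using homog1_keys[OF assms(2) w] by blast
  ultimately show "Delta (wd v \<diamond> wd w) \<approx> Delta (wd v) \<diamond> Delta (wd w)"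
    using Delta_Q[of p q] by simp
qed (simp_all add: Delta_linear dprod_linear)

lemma Delta_dprod_Sh:
  assumes "x \<in> Sh" "y \<in> Sh"
  shows "teq s (Delta (x \<diamond> y)) (Delta x \<diamond> Delta y)"
proof (rule mlin_eq_teq)
  have "Delta (x \<diamond> y) = Delta (drop_empty x \<diamond> drop_empty y)"
    by (simp only: dprod_drop_empty_left dprod_drop_empty_right)
  also have "\<dots> \<approx> Delta (drop_empty x) \<diamond> Delta (drop_empty y)"
    by (rule Delta_dprod_homog) (simp_all add: homog_drop_empty assms)
  also have "\<dots> \<approx> Delta x \<diamond> Delta y"
    by (intro mlin_eq_dprod teq_Delta teq_drop_empty)
  finally show "Delta (x \<diamond> y) \<approx> Delta x \<diamond> Delta y" .
qed

lemma Delta_ue: "teq s (Delta (ue e 1)) (wd [[e], [e]])"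
  by (simp add: ue_def DA_unit)

lemma eps_ue: "eps (ue e 1) = 1"
  by (simp add: ue_def epsA_unit)

end

theorem theorem4p7:
  fixes s :: "'k::comm_ring_1 \<Rightarrow> 'a::ab_group_add \<Rightarrow> 'a"
    and m :: "'a \<Rightarrow> 'a \<Rightarrow> 'a" and e :: 'a
    and DA :: "'a \<Rightarrow> ('a,'k) tw" and epsA :: "'a \<Rightarrow> 'k"
    and lam kap mu :: 'k
  assumes root: "mu ^ 2 - lam * mu + kap = 0"
    \<comment> \<open>A is a k-module\<close>
    and module: "Modules.module s"
    \<comment> \<open>A is a commutative k-algebra with multiplication m and unit e\<close>
    and m_add_left: "\<And>x y z. m (x + y) z = m x z + m y z"
    and m_add_right: "\<And>x y z. m x (y + z) = m x y + m x z"
    and m_scale_left: "\<And>c x y. m (s c x) y = s c (m x y)"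
    and m_scale_right: "\<And>c x y. m x (s c y) = s c (m x y)"
    and m_assoc: "\<And>x y z. m (m x y) z = m x (m y z)"
    and m_comm: "\<And>x y. m x y = m y x"
    and m_unit: "\<And>x. m e x = x"
    \<comment> \<open>A is a coalgebra: Delta_A takes values in A (x) A and is k-linear, eps_A is k-linear\<close>
    and DA_shape: "\<And>x. \<forall>w\<in>Poly_Mapping.keys (DA x). \<exists>a b. w = [[a], [b]]"
    and DA_add: "\<And>x y. teq s (DA (x + y)) (DA x + DA y)"
    and DA_scale: "\<And>c x. teq s (DA (s c x)) (tsmult c (DA x))"
    and epsA_add: "\<And>x y. epsA (x + y) = epsA x + epsA y"
    and epsA_scale: "\<And>c x. epsA (s c x) = c * epsA x"
    and coassoc_A: "\<And>x. teq s
          (tmap2 (\<lambda>v. case v of [a] \<Rightarrow> DA a | _ \<Rightarrow> 0) (\<lambda>v. wd [v]) (DA x))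
          (tmap2 (\<lambda>v. wd [v]) (\<lambda>v. case v of [a] \<Rightarrow> DA a | _ \<Rightarrow> 0) (DA x))"
    and counit_A_left: "\<And>x. teq s
          (tmap2 (\<lambda>v. case v of [a] \<Rightarrow> tsmult (epsA a) (wd []) | _ \<Rightarrow> 0) (\<lambda>v. wd [v]) (DA x))
          (wd [[x]])"
    and counit_A_right: "\<And>x. teq s
          (tmap2 (\<lambda>v. wd [v]) (\<lambda>v. case v of [a] \<Rightarrow> tsmult (epsA a) (wd []) | _ \<Rightarrow> 0) (DA x))
          (wd [[x]])"
    \<comment> \<open>Delta_A and eps_A are algebra homomorphisms\<close>
    and DA_mult: "\<And>x y. teq s (DA (m x y)) (dprod m e lam kap (DA x) (DA y))"
    and DA_unit: "teq s (DA e) (wd [[e], [e]])"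
    and epsA_mult: "\<And>x y. epsA (m x y) = epsA x * epsA y"
    and epsA_unit: "epsA e = 1"
  shows
    \<comment> \<open>(Sh_e(A), <>, u_e) is a k-algebra\<close>
    "(\<forall>x\<in>Sh. \<forall>y\<in>Sh. dprod m e lam kap x y \<in> Sh)
     \<and> (\<forall>x\<in>Sh. \<forall>x'\<in>Sh. \<forall>y\<in>Sh. teq s x x' \<longrightarrow>
          teq s (dprod m e lam kap x y) (dprod m e lam kap x' y)
        \<and> teq s (dprod m e lam kap y x) (dprod m e lam kap y x'))
     \<and> (\<forall>x\<in>Sh. \<forall>y\<in>Sh. \<forall>z\<in>Sh. \<forall>c.
          teq s (dprod m e lam kap (x + y) z) (dprod m e lam kap x z + dprod m e lam kap y z)
        \<and> teq s (dprod m e lam kap z (x + y)) (dprod m e lam kap z x + dprod m e lam kap z y)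
        \<and> teq s (dprod m e lam kap (tsmult c x) y) (tsmult c (dprod m e lam kap x y))
        \<and> teq s (dprod m e lam kap x (tsmult c y)) (tsmult c (dprod m e lam kap x y)))
     \<and> (\<forall>x\<in>Sh. \<forall>y\<in>Sh. \<forall>z\<in>Sh.
          teq s (dprod m e lam kap (dprod m e lam kap x y) z) (dprod m e lam kap x (dprod m e lam kap y z)))
     \<and> (\<forall>x\<in>Sh. \<forall>c.
          teq s (dprod m e lam kap (ue e c) x) (tsmult c x)
        \<and> teq s (dprod m e lam kap x (ue e c)) (tsmult c x))
    \<comment> \<open>(Sh_e(A), Delta_e, eps_e) is a k-coalgebra\<close>
     \<and> (\<forall>x\<in>Sh. De m e lam kap mu DA epsA x \<in> Sh2)
     \<and> (\<forall>x\<in>Sh. \<forall>x'\<in>Sh. teq s x x' \<longrightarrow>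
          teq s (De m e lam kap mu DA epsA x) (De m e lam kap mu DA epsA x')
        \<and> epse epsA mu x = epse epsA mu x')
     \<and> (\<forall>x\<in>Sh. \<forall>y\<in>Sh. \<forall>c.
          teq s (De m e lam kap mu DA epsA (x + y)) (De m e lam kap mu DA epsA x + De m e lam kap mu DA epsA y)
        \<and> teq s (De m e lam kap mu DA epsA (tsmult c x)) (tsmult c (De m e lam kap mu DA epsA x))
        \<and> epse epsA mu (x + y) = epse epsA mu x + epse epsA mu y
        \<and> epse epsA mu (tsmult c x) = c * epse epsA mu x)
     \<and> (\<forall>x\<in>Sh.
          teq s (tmap2 (Dw m e lam kap mu DA epsA) (\<lambda>v. wd [v]) (De m e lam kap mu DA epsA x))
                (tmap2 (\<lambda>v. wd [v]) (Dw m e lam kap mu DA epsA) (De m e lam kap mu DA epsA x)))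
     \<and> (\<forall>x\<in>Sh.
          teq s (tmap2 (\<lambda>v. tsmult (epsw epsA mu v) (wd [])) (\<lambda>v. wd [v]) (De m e lam kap mu DA epsA x)) x
        \<and> teq s (tmap2 (\<lambda>v. wd [v]) (\<lambda>v. tsmult (epsw epsA mu v) (wd [])) (De m e lam kap mu DA epsA x)) x)
    \<comment> \<open>Delta_e and eps_e are algebra homomorphisms\<close>
     \<and> (\<forall>x\<in>Sh. \<forall>y\<in>Sh.
          teq s (De m e lam kap mu DA epsA (dprod m e lam kap x y))
                (dprod m e lam kap (De m e lam kap mu DA epsA x) (De m e lam kap mu DA epsA y))
        \<and> epse epsA mu (dprod m e lam kap x y) = epse epsA mu x * epse epsA mu y)
     \<and> teq s (De m e lam kap mu DA epsA (ue e 1)) (wd [[e], [e]])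
     \<and> epse epsA mu (ue e 1) = 1"
proof -
  interpret ext_rb_bialgebra m e lam kap s DA epsA mu
    by unfold_locales (fact assms)+
  show ?thesis
    using dprod_Sh teq_dprod_left teq_dprod_right dprod_assoc_Sh ue_dprod_Sh dprod_ue_Sh Delta_Sh2
      teq_Delta teq_eps coassoc_Sh counit_Sh Delta_dprod_Sh eps_dprod_Sh Delta_ue eps_ue
    by (simp add: mlin_eq_teq dprod_linear Delta_linear eps_add eps_tsmult teq_refl)
qed

end
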